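(* Assume there exist $K\ge1$ and Markov reference policies with densities $\bar\pi_i(x,\cdot)$ w.r.t. $\lambda_{\mathbb A}$, $i\in[n]$, such that $\frac1K\le\frac{\bar\pi_i(x,a)}{\pi_i^*(x,\mathbf o_{i-1};a)}\le K$ for all $(x,\mathbf o_{i-1},a)$ and $i$. Assume (LN): $0<\|\sigma\|_{(n)}<\infty$ and $\sqrt n\,\delta(x,a)\ge\frac{|g(x,a)|\sigma^2(x,a)}{\bar\pi_i(x,a)\|\sigma\|_{(n)}}$ for all $(x,a,i)\in\mathbb X\times\mathbb A\times[n]$. Then $$\mathcal M_n(\mathcal C_\delta(\mathcal I^* ))\ge\frac1{8K^4}\cdot\frac{\|\sigma\|_{(n)}^2}{n}.$$
   Context: Setup. Let $(\mathbb X,\lambda_{\mathbb X})$, $(\mathbb A,\lambda_{\mathbb A})$ be measurable spaces with $\sigma$-finite measures, $\mathbb Y=\mathbb R$ with Lebesgue measure, $\mathbb O:=\mathbb X\times\mathbb A\times\mathbb Y$. A problem instance is $\mathcal I=(\Xi,\Gamma)$, $\Xi$ a probability measure on $\mathbb X$, $\Gamma$ a Markov kernel from $\mathbb X\times\mathbb A$ to $\mathbb Y$ with finite means $\mu(\Gamma)(x,a):=\int y\,\Gamma(dy\mid x,a)$. Fixed known behavioral policies (the same for every instance) have densities $\pi_i^*(x,\mathbf o_{i-1};\cdot)$ w.r.t. $\lambda_{\mathbb A}$. Under $\mathcal I$ data $\mathbf O_n=(X_1,A_1,Y_1,\dots,X_n,A_n,Y_n)$ are generated sequentially: $X_i\sim\Xi$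 independently of $\mathbf O_{i-1}$ (first $i-1$ triples); $A_i\mid(X_i,\mathbf O_{i-1})$ has density $\pi_i^*(X_i,\mathbf O_{i-1};\cdot)$; $Y_i\mid(X_i,A_i,\mathbf O_{i-1})\sim\Gamma(\cdot\mid X_i,A_i)$. $g:\mathbb X\times\mathbb A\to\mathbb R$ is a given evaluation function, $\langle f,h\rangle_{\lambda_{\mathbb A}}:=\int fh\,d\lambda_{\mathbb A}$, $\tau(\mathcal I):=\mathbb E_{X\sim\Xi}[\langle g(X,\cdot),\mu(\Gamma)(X,\cdot)\rangle_{\lambda_{\mathbb A}}]$. True instance $\mathcal I^*=(\Xi^*,\Gamma^* )$, $\mu^*:=\mu(\Gamma^* )$, $\sigma^2(x,a):=\int(y-\mu^*(x,a))^2\Gamma^*(dy\mid x,a)<\infty$. $\|\sigma\|_{(n)}^2:=\frac1n\sum_{i=1}^n\mathbb E_{\mathcal I^*}[g^2(X_i,A_i)\sigma^2(X_i,A_i)/(\pi_i^* )^2(X_i,\mathbf O_{i-1};A_i)]$. For $\delta:\mathbb X\times\mathbb A\to\mathbb R_+$: $\mathcal N(\Xi^* ):=\{\Xi:\mathrm{KL}(\Xi\|\Xi^* )\le1/n\}$, $\mathcal N_\delta(\Gamma^* ):=\{\Gamma:|\mu(\Gamma)(x,a)-\mu^*(x,a)|\le\delta(x,a)\ \forall(x,a)\}$, $\mathcal C_\delta(\mathcal I^* ):=\mathcal N(\Xi^* )\times\mathcal N_\delta(\Gamma^* )$. Local minimax risk: $\mathcal M_n(\mathcal C_\delta(\mathcal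 I^* )):=\inf_{\hat\tau_n}\sup_{\mathcal I\in\mathcal C_\delta(\mathcal I^* )}\mathbb E_{\mathcal I}[\{\hat\tau_n(\mathbf O_n)-\tau(\mathcal I)\}^2]$, the infimum over all measurable $\hat\tau_n:\mathbb O^n\to\mathbb R$. *)

theory Defs
  imports "HOL-Probability.Probability"
begin

text \<open>Data O_n and histories O_{i} are represented as extensional functions on the
  index set {..<k}, i.e. elements of the product measure space below.
  Indices are 0-based: the paper's round i (1..n) is our round i-1, and the
  history O_{i-1} passed to the policy of the paper's round i is an element of
  hist_space MX MA (i-1).\<close>

definition obs_space :: "'x measure \<Rightarrow> 'a measure \<Rightarrow> ('x \<times> 'a \<times> real) measure" where
  "obs_space MX MA = MX \<Otimes>\<^sub>M (MA \<Otimes>\<^sub>M (borel :: real measure))"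

definition hist_space :: "'x measure \<Rightarrow> 'a measure \<Rightarrow> nat \<Rightarrow> (nat \<Rightarrow> 'x \<times> 'a \<times> real) measure" where
  "hist_space MX MA k = PiM {..<k} (\<lambda>_. obs_space MX MA)"

text \<open>pol k x h a is the density (w.r.t. MA) of the behavioural policy of round k
  (0-based) at context x and history h (first k triples).\<close>

fun data_law :: "'x measure \<Rightarrow> 'a measure \<Rightarrow> (nat \<Rightarrow> 'x \<Rightarrow> (nat \<Rightarrow> 'x \<times> 'a \<times> real) \<Rightarrow> 'a \<Rightarrow> real)
    \<Rightarrow> 'x measure \<Rightarrow> ('x \<Rightarrow> 'a \<Rightarrow> real measure) \<Rightarrow> nat \<Rightarrow> (nat \<Rightarrow> 'x \<times> 'a \<times> real) measure" where
  "data_law MX MA pol Xi Gam 0 = return (hist_space MX MA 0) (\<lambda>_. undefined)"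
| "data_law MX MA pol Xi Gam (Suc k) =
     data_law MX MA pol Xi Gam k \<bind> (\<lambda>h.
       Xi \<bind> (\<lambda>x.
         density MA (\<lambda>a. ennreal (pol k x h a)) \<bind> (\<lambda>a.
           Gam x a \<bind> (\<lambda>y. return (hist_space MX MA (Suc k)) (h(k := (x, a, y)))))))"

definition cond_mean :: "('x \<Rightarrow> 'a \<Rightarrow> real measure) \<Rightarrow> 'x \<Rightarrow> 'a \<Rightarrow> real" where
  "cond_mean Gam x a = (\<integral>y. y \<partial>(Gam x a))"

definition is_instance :: "'x measure \<Rightarrow> 'a measure \<Rightarrow> 'x measure \<Rightarrow> ('x \<Rightarrow> 'a \<Rightarrow> real measure) \<Rightarrow> bool" where
  "is_instance MX MA Xi Gam \<longleftrightarrow>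
     prob_space Xi \<and> sets Xi = sets MX \<and>
     (\<lambda>(x, a). Gam x a) \<in> MX \<Otimes>\<^sub>M MA \<rightarrow>\<^sub>M prob_algebra (borel :: real measure) \<and>
     (\<forall>x\<in>space MX. \<forall>a\<in>space MA. integrable (Gam x a) (\<lambda>y. y))"

definition tau :: "'a measure \<Rightarrow> ('x \<Rightarrow> 'a \<Rightarrow> real) \<Rightarrow> 'x measure \<Rightarrow> ('x \<Rightarrow> 'a \<Rightarrow> real measure) \<Rightarrow> real" where
  "tau MA g Xi Gam = (\<integral>x. (\<integral>a. g x a * cond_mean Gam x a \<partial>MA) \<partial>Xi)"

definition tau_defined :: "'a measure \<Rightarrow> ('x \<Rightarrow> 'a \<Rightarrow> real) \<Rightarrow> 'x measure \<Rightarrow> ('x \<Rightarrow> 'a \<Rightarrow> real measure) \<Rightarrow> bool" where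
  "tau_defined MA g Xi Gam \<longleftrightarrow>
     (AE x in Xi. integrable MA (\<lambda>a. g x a * cond_mean Gam x a)) \<and>
     integrable Xi (\<lambda>x. \<integral>a. g x a * cond_mean Gam x a \<partial>MA)"

text \<open>KL(P || Q) <= c, with natural logarithm; KL(P || Q) = +infinity unless P << Q and the
  log-density is P-integrable.  KL_divergence b Q P is the library's
  integral of log_b (dP/dQ) w.r.t. P.\<close>

definition KL_le :: "'x measure \<Rightarrow> 'x measure \<Rightarrow> real \<Rightarrow> bool" where
  "KL_le P Q c \<longleftrightarrow>
     absolutely_continuous Q P \<and>
     integrable P (\<lambda>x. ln (enn2real (RN_deriv Q P x))) \<and>
     KL_divergence (exp 1) Q P \<le> c"

definition local_class :: "'x measure \<Rightarrow> 'a measure \<Rightarrow> ('x \<Rightarrow> 'a \<Rightarrow> real) \<Rightarrow> nat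
    \<Rightarrow> ('x \<Rightarrow> 'a \<Rightarrow> real) \<Rightarrow> 'x measure \<Rightarrow> ('x \<Rightarrow> 'a \<Rightarrow> real measure)
    \<Rightarrow> ('x measure \<times> ('x \<Rightarrow> 'a \<Rightarrow> real measure)) set" where
  "local_class MX MA g n \<delta> Xis Gams =
     {(Xi, Gam). is_instance MX MA Xi Gam \<and> tau_defined MA g Xi Gam \<and>
        KL_le Xi Xis (1 / real n) \<and>
        (\<forall>x\<in>space MX. \<forall>a\<in>space MA. \<bar>cond_mean Gam x a - cond_mean Gams x a\<bar> \<le> \<delta> x a)}"

definition local_minimax :: "'x measure \<Rightarrow> 'a measure \<Rightarrow> (nat \<Rightarrow> 'x \<Rightarrow> (nat \<Rightarrow> 'x \<times> 'a \<times> real) \<Rightarrow> 'a \<Rightarrow> real)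
    \<Rightarrow> ('x \<Rightarrow> 'a \<Rightarrow> real) \<Rightarrow> nat
    \<Rightarrow> ('x measure \<times> ('x \<Rightarrow> 'a \<Rightarrow> real measure)) set \<Rightarrow> ennreal" where
  "local_minimax MX MA pol g n C =
     (INF est \<in> borel_measurable (hist_space MX MA n).
        SUP I \<in> C. \<integral>\<^sup>+ \<omega>. ennreal ((est \<omega> - tau MA g (fst I) (snd I))\<^sup>2)
                          \<partial>data_law MX MA pol (fst I) (snd I) n)"

definition noise_var :: "('x \<Rightarrow> 'a \<Rightarrow> real measure) \<Rightarrow> 'x \<Rightarrow> 'a \<Rightarrow> real" where
  "noise_var Gam x a = (\<integral>y. (y - cond_mean Gam x a)\<^sup>2 \<partial>(Gam x a))"

definition sigma_norm_sq :: "'x measure \<Rightarrow> 'a measure \<Rightarrow> (nat \<Rightarrow> 'x \<Rightarrow> (nat \<Rightarrow> 'x \<times> 'a \<times> real) \<Rightarrow> 'a \<Rightarrow> real)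
    \<Rightarrow> ('x \<Rightarrow> 'a \<Rightarrow> real) \<Rightarrow> nat \<Rightarrow> 'x measure \<Rightarrow> ('x \<Rightarrow> 'a \<Rightarrow> real measure) \<Rightarrow> ennreal" where
  "sigma_norm_sq MX MA pol g n Xis Gams =
     ennreal (1 / real n) *
       (\<Sum>i<n. \<integral>\<^sup>+ \<omega>. ennreal ((g (fst (\<omega> i)) (fst (snd (\<omega> i))))\<^sup>2
                                * noise_var Gams (fst (\<omega> i)) (fst (snd (\<omega> i)))
                                / (pol i (fst (\<omega> i)) (restrict \<omega> {..<i}) (fst (snd (\<omega> i))))\<^sup>2)
                  \<partial>data_law MX MA pol Xis Gams n)"

end

theory Submission
  imports Defs
begin

(*
  Le Cam's two-point method.  Fix a round i whose inverse-propensity-weighted term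
  E[g^2 sigma^2 / pi_i^2] is at least the average ||sigma||_(n)^2, and perturb every outcome law
  Gamma*(x, a) by mixing in, with weight eps = 1/(2n), a point mass that shifts its mean by
  s = g sigma^2 / (pibar_i ||sigma||_(n) sqrt n); condition (LN) says exactly |s| <= delta.
  The perturbed kernel dominates (1 - eps) Gamma*, so the law of the n observations dominates
  (1 - eps)^n >= 1/2 times the original one, while tau moves by
  Delta = E_X <g^2 sigma^2 / pibar_i> / (||sigma||_(n) sqrt n) >= ||sigma||_(n) / (K sqrt n),
  because pibar_i <= K pi_i.  The two-point inequality bounds the minimax risk below by
  Delta^2 / 6 >= ||sigma||_(n)^2 / (6 K^2 n), which exceeds the claimed bound since K >= 1.
*)

lemma prob_space_density:
  assumes "f \<in> borel_measurable M" "(\<integral>\<^sup>+ x. f x \<partial>M) = 1"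
  shows "prob_space (density M f)"
proof (rule prob_spaceI)
  have "(\<integral>\<^sup>+x. f x * indicator (space M) x \<partial>M) = (\<integral>\<^sup>+ x. f x \<partial>M)"
    by (rule nn_integral_cong) simp
  then show "emeasure (density M f) (space (density M f)) = 1"
    using assms by (simp add: emeasure_density)
qed

lemma measurable_density_prob_algebra:
  fixes f :: "'p \<Rightarrow> 'b \<Rightarrow> ennreal"
  assumes sf: "sigma_finite_measure M"
    and f: "(\<lambda>(p, y). f p y) \<in> borel_measurable (N \<Otimes>\<^sub>M M)"
    and one: "\<And>p. p \<in> space N \<Longrightarrow> (\<integral>\<^sup>+y. f p y \<partial>M) = 1"
  shows "(\<lambda>p. density M (f p)) \<in> N \<rightarrow>\<^sub>M prob_algebra M"
proof (rule measurable_prob_algebraI)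
  have sec: "f p \<in> borel_measurable M" if "p \<in> space N" for p
    using measurable_Pair2[OF f that] by simp
  show prob: "prob_space (density M (f p))" if "p \<in> space N" for p
    using prob_space_density[OF sec[OF that] one[OF that]] .
  show "(\<lambda>p. density M (f p)) \<in> N \<rightarrow>\<^sub>M subprob_algebra M"
  proof (rule measurable_subprob_algebra)
    show "subprob_space (density M (f p))" if "p \<in> space N" for p
      using prob[OF that] by (rule prob_space_imp_subprob_space)
    show "sets (density M (f p)) = sets M" for p
      by simp
    fix A assume A: "A \<in> sets M"
    have "(\<lambda>(p, y). f p y * indicator A y) \<in> borel_measurable (N \<Otimes>\<^sub>M M)"
      using f A by measurable
    then have "(\<lambda>p. \<integral>\<^sup>+y. f p y * indicator A y \<partial>M) \<in> borel_measurable N"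
      by (rule sigma_finite_measure.borel_measurable_nn_integral[OF sf])
    then show "(\<lambda>p. emeasure (density M (f p)) A) \<in> borel_measurable N"
      by (rule measurable_cong[THEN iffD1, rotated]) (simp add: emeasure_density sec A)
  qed
qed

lemma enn2real_convex_combination:
  assumes "0 \<le> e" "e \<le> 1" "P1 < \<infinity>" "P2 < \<infinity>"
  shows "enn2real (ennreal e * P1 + ennreal (1 - e) * P2) = e * enn2real P1 + (1 - e) * enn2real P2"
  using assms by (simp add: enn2real_plus enn2real_mult ennreal_mult_less_top)

definition bernoulli_mixture :: "real \<Rightarrow> real measure \<Rightarrow> real measure \<Rightarrow> real measure" where
  "bernoulli_mixture e N1 N2 = measure_pmf (bernoulli_pmf e) \<bind> (\<lambda>b. if b then N1 else N2)"

lemma bernoulli_mixture_in_prob_algebra: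
  assumes "N1 \<in> space (prob_algebra borel)" "N2 \<in> space (prob_algebra borel)"
  shows "bernoulli_mixture e N1 N2 \<in> space (prob_algebra borel)"
proof -
  have "measure_pmf (bernoulli_pmf e) \<in> space (prob_algebra (count_space UNIV))"
    by (simp add: space_prob_algebra prob_space_measure_pmf)
  then have "(\<lambda>_::unit. measure_pmf (bernoulli_pmf e) \<bind> (\<lambda>b. if b then N1 else N2))
      \<in> count_space UNIV \<rightarrow>\<^sub>M prob_algebra borel"
    by (intro measurable_bind_prob_space[OF measurable_const]) (use assms in auto)
  from measurable_space[OF this, of undefined] show ?thesis
    by (simp add: bernoulli_mixture_def)
qed

lemma nn_integral_bernoulli_mixture:
  assumes "N1 \<in> space (prob_algebra borel)" "N2 \<in> space (prob_algebra borel)"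
    and e: "0 \<le> e" "e \<le> 1" and G: "G \<in> borel_measurable borel"
  shows "(\<integral>\<^sup>+y. G y \<partial>bernoulli_mixture e N1 N2)
      = ennreal e * (\<integral>\<^sup>+y. G y \<partial>N1) + ennreal (1 - e) * (\<integral>\<^sup>+y. G y \<partial>N2)"
proof -
  have "(\<lambda>b. if b then N1 else N2) \<in> measure_pmf (bernoulli_pmf e) \<rightarrow>\<^sub>M prob_algebra borel"
    using assms(1,2) by simp
  then have "(\<lambda>b. if b then N1 else N2) \<in> measure_pmf (bernoulli_pmf e) \<rightarrow>\<^sub>M subprob_algebra borel"
    by (rule measurable_prob_algebraD)
  then have "(\<integral>\<^sup>+y. G y \<partial>bernoulli_mixture e N1 N2)
      = (\<integral>\<^sup>+b. (\<integral>\<^sup>+y. G y \<partial>(if b then N1 else N2)) \<partial>measure_pmf (bernoulli_pmf e))"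
    unfolding bernoulli_mixture_def by (rule nn_integral_bind[OF G])
  also have "\<dots> = (\<integral>\<^sup>+b. (if b then \<integral>\<^sup>+y. G y \<partial>N1 else \<integral>\<^sup>+y. G y \<partial>N2) \<partial>measure_pmf (bernoulli_pmf e))"
    by (rule nn_integral_cong) simp
  also have "\<dots> = ennreal e * (\<integral>\<^sup>+y. G y \<partial>N1) + ennreal (1 - e) * (\<integral>\<^sup>+y. G y \<partial>N2)"
    by (subst nn_integral_measure_pmf_support[of UNIV]) (use e in \<open>auto simp: UNIV_bool mult_ac\<close>)
  finally show ?thesis .
qed

lemma measurable_bernoulli_mixture:
  assumes [measurable]: "N1 \<in> M \<rightarrow>\<^sub>M prob_algebra borel" "N2 \<in> M \<rightarrow>\<^sub>M prob_algebra borel"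
  shows "(\<lambda>p. bernoulli_mixture e (N1 p) (N2 p)) \<in> M \<rightarrow>\<^sub>M prob_algebra borel"
  unfolding bernoulli_mixture_def
proof (rule measurable_bind_prob_space2[where N="measure_pmf (bernoulli_pmf e)"])
  show "(\<lambda>p. measure_pmf (bernoulli_pmf e)) \<in> M \<rightarrow>\<^sub>M prob_algebra (measure_pmf (bernoulli_pmf e))"
    by (rule measurable_const) (simp add: space_prob_algebra prob_space_measure_pmf)
  have "(\<lambda>q. if snd q then N1 (fst q) else N2 (fst q))
      \<in> M \<Otimes>\<^sub>M measure_pmf (bernoulli_pmf e) \<rightarrow>\<^sub>M prob_algebra borel"
    by measurable
  then show "(\<lambda>(p, b). if b then N1 p else N2 p)
      \<in> M \<Otimes>\<^sub>M measure_pmf (bernoulli_pmf e) \<rightarrow>\<^sub>M prob_algebra borel"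
    by (simp add: case_prod_beta')
qed

lemma integral_bernoulli_mixture:
  assumes N1: "N1 \<in> space (prob_algebra borel)" and N2: "N2 \<in> space (prob_algebra borel)"
    and e: "0 \<le> e" "e \<le> 1"
    and int: "integrable N1 (\<lambda>y. y)" "integrable N2 (\<lambda>y. y)"
  shows "integrable (bernoulli_mixture e N1 N2) (\<lambda>y. y)"
    and "(\<integral>y. y \<partial>bernoulli_mixture e N1 N2) = e * (\<integral>y. y \<partial>N1) + (1 - e) * (\<integral>y. y \<partial>N2)"
proof -
  let ?N = "bernoulli_mixture e N1 N2"
  have sets: "sets ?N = sets borel"
    using bernoulli_mixture_in_prob_algebra[OF N1 N2] by (simp add: space_prob_algebra)
  have fin: "(\<integral>\<^sup>+y. ennreal (f y) \<partial>N) < \<infinity>"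
    if "integrable N (\<lambda>y. y)" "\<And>y. \<bar>f y\<bar> \<le> \<bar>y\<bar>" for N and f :: "real \<Rightarrow> real"
  proof -
    have "(\<integral>\<^sup>+y. ennreal (f y) \<partial>N) \<le> (\<integral>\<^sup>+y. ennreal (norm y) \<partial>N)"
      by (intro nn_integral_mono ennreal_leI) (use that(2) abs_ge_self order.trans in fastforce)
    also have "\<dots> < \<infinity>"
      using that(1) by (simp add: integrable_iff_bounded)
    finally show ?thesis .
  qed
  note mix = nn_integral_bernoulli_mixture[OF N1 N2 e]
  have parts: "enn2real (\<integral>\<^sup>+y. ennreal (f y) \<partial>?N)
      = e * enn2real (\<integral>\<^sup>+y. ennreal (f y) \<partial>N1) + (1 - e) * enn2real (\<integral>\<^sup>+y. ennreal (f y) \<partial>N2)"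
    if "f \<in> borel_measurable borel" "\<And>y. \<bar>f y\<bar> \<le> \<bar>y\<bar>" for f
  proof -
    have G: "(\<lambda>y. ennreal (f y)) \<in> borel_measurable borel"
      using that(1) by measurable
    show ?thesis
      unfolding mix[OF G]
      by (rule enn2real_convex_combination[OF e fin[OF int(1) that(2)] fin[OF int(2) that(2)]])
  qed
  show I: "integrable ?N (\<lambda>y. y)"
    unfolding integrable_iff_bounded
    using fin[OF int(1), of "\<lambda>y. norm y"] fin[OF int(2), of "\<lambda>y. norm y"]
    by (auto simp: mix measurable_cong_sets[OF sets refl] ennreal_mult_less_top)
  have "(\<integral>y. y \<partial>?N) = enn2real (\<integral>\<^sup>+y. ennreal y \<partial>?N) - enn2real (\<integral>\<^sup>+y. ennreal (- y) \<partial>?N)"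
    by (rule real_lebesgue_integral_def[OF I])
  also have "\<dots> = e * (enn2real (\<integral>\<^sup>+y. ennreal y \<partial>N1) - enn2real (\<integral>\<^sup>+y. ennreal (- y) \<partial>N1))
      + (1 - e) * (enn2real (\<integral>\<^sup>+y. ennreal y \<partial>N2) - enn2real (\<integral>\<^sup>+y. ennreal (- y) \<partial>N2))"
    using parts[of "\<lambda>y. y"] parts[of uminus] by (simp add: algebra_simps)
  also have "\<dots> = e * (\<integral>y. y \<partial>N1) + (1 - e) * (\<integral>y. y \<partial>N2)"
    by (simp only: real_lebesgue_integral_def[OF int(1)] real_lebesgue_integral_def[OF int(2)])
  finally show "(\<integral>y. y \<partial>?N) = e * (\<integral>y. y \<partial>N1) + (1 - e) * (\<integral>y. y \<partial>N2)" .
qed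

lemma iterated_integral_nonneg:
  fixes w :: "'x \<Rightarrow> 'a \<Rightarrow> real"
  assumes sfA: "sigma_finite_measure MA" and Xi: "sets Xi = sets MX"
    and w_meas: "(\<lambda>(x, a). w x a) \<in> borel_measurable (MX \<Otimes>\<^sub>M MA)"
    and w_nonneg: "\<And>x a. x \<in> space MX \<Longrightarrow> a \<in> space MA \<Longrightarrow> 0 \<le> w x a"
    and fin: "(\<integral>\<^sup>+x. \<integral>\<^sup>+a. ennreal (w x a) \<partial>MA \<partial>Xi) < \<infinity>"
  shows "AE x in Xi. integrable MA (w x)"
    and "integrable Xi (\<lambda>x. \<integral>a. w x a \<partial>MA)"
    and "(\<integral>x. \<integral>a. w x a \<partial>MA \<partial>Xi) = enn2real (\<integral>\<^sup>+x. \<integral>\<^sup>+a. ennreal (w x a) \<partial>MA \<partial>Xi)"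
proof -
  have space_Xi: "space Xi = space MX"
    using sets_eq_imp_space_eq[OF Xi] .
  have w_sec: "w x \<in> borel_measurable MA" if "x \<in> space MX" for x
    using measurable_Pair2[OF w_meas that] by simp
  have nn_w: "(\<lambda>x. \<integral>\<^sup>+a. ennreal (w x a) \<partial>MA) \<in> borel_measurable Xi"
    using sigma_finite_measure.borel_measurable_nn_integral[OF sfA, of "\<lambda>x a. ennreal (w x a)"] w_meas
    by (simp add: measurable_cong_sets[OF Xi refl])
  define Iw where "Iw x = enn2real (\<integral>\<^sup>+a. ennreal (w x a) \<partial>MA)" for x
  have int_w: "(\<integral>a. w x a \<partial>MA) = Iw x" if "x \<in> space Xi" for x
    using w_nonneg that unfolding Iw_def space_Xi
    by (intro integral_eq_nn_integral w_sec AE_I2) auto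
  have AE_fin: "AE x in Xi. (\<integral>\<^sup>+a. ennreal (w x a) \<partial>MA) \<noteq> \<infinity>"
    using nn_integral_PInf_AE[OF nn_w] fin by simp
  then show "AE x in Xi. integrable MA (w x)"
    using AE_space
  proof eventually_elim
    case (elim x)
    then have x: "x \<in> space MX"
      by (simp add: space_Xi)
    show ?case
      using elim(1) w_nonneg[OF x]
      by (intro integrableI_nonneg w_sec[OF x] AE_I2) (auto simp: top.not_eq_extremum)
  qed
  have Iw_meas: "Iw \<in> borel_measurable Xi"
    unfolding Iw_def[abs_def] by (rule borel_measurable_enn2real[OF nn_w])
  have Iw_nn: "(\<integral>\<^sup>+x. ennreal (Iw x) \<partial>Xi) = (\<integral>\<^sup>+x. \<integral>\<^sup>+a. ennreal (w x a) \<partial>MA \<partial>Xi)"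
    unfolding Iw_def
    by (rule nn_integral_cong_AE) (use AE_fin in \<open>eventually_elim, simp add: ennreal_enn2real_if\<close>)
  have "integrable Xi Iw"
    using Iw_nn fin by (intro integrableI_nonneg[OF Iw_meas]) (auto simp: Iw_def)
  then show "integrable Xi (\<lambda>x. \<integral>a. w x a \<partial>MA)"
    by (rule Bochner_Integration.integrable_cong[THEN iffD2, OF refl int_w, rotated])
  have "(\<integral>x. \<integral>a. w x a \<partial>MA \<partial>Xi) = (\<integral>x. Iw x \<partial>Xi)"
    by (rule Bochner_Integration.integral_cong[OF refl int_w])
  also have "\<dots> = enn2real (\<integral>\<^sup>+x. ennreal (Iw x) \<partial>Xi)"
    by (rule integral_eq_nn_integral[OF Iw_meas]) (simp add: Iw_def)
  also have "\<dots> = enn2real (\<integral>\<^sup>+x. \<integral>\<^sup>+a. ennreal (w x a) \<partial>MA \<partial>Xi)"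
    by (simp only: Iw_nn)
  finally show "(\<integral>x. \<integral>a. w x a \<partial>MA \<partial>Xi) = enn2real (\<integral>\<^sup>+x. \<integral>\<^sup>+a. ennreal (w x a) \<partial>MA \<partial>Xi)" .
qed

lemma nn_integral_iterated_cmult:
  assumes sfA: "sigma_finite_measure MA" and Xi: "sets Xi = sets MX"
    and f: "(\<lambda>(x, a). f x a) \<in> borel_measurable (MX \<Otimes>\<^sub>M MA)"
  shows "(\<integral>\<^sup>+x. \<integral>\<^sup>+a. c * f x a \<partial>MA \<partial>Xi) = c * (\<integral>\<^sup>+x. \<integral>\<^sup>+a. f x a \<partial>MA \<partial>Xi)"
proof -
  have "(\<integral>\<^sup>+x. \<integral>\<^sup>+a. c * f x a \<partial>MA \<partial>Xi) = (\<integral>\<^sup>+x. c * \<integral>\<^sup>+a. f x a \<partial>MA \<partial>Xi)"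
  proof (rule nn_integral_cong)
    fix x assume "x \<in> space Xi"
    then have "x \<in> space MX"
      using sets_eq_imp_space_eq[OF Xi] by simp
    then show "(\<integral>\<^sup>+a. c * f x a \<partial>MA) = c * \<integral>\<^sup>+a. f x a \<partial>MA"
      using measurable_Pair2[OF f] by (intro nn_integral_cmult) simp
  qed
  also have "\<dots> = c * (\<integral>\<^sup>+x. \<integral>\<^sup>+a. f x a \<partial>MA \<partial>Xi)"
    using sigma_finite_measure.borel_measurable_nn_integral[OF sfA f]
    by (intro nn_integral_cmult) (simp add: measurable_cong_sets[OF Xi refl])
  finally show ?thesis .
qed

lemma exists_ge_average:
  fixes T :: "nat \<Rightarrow> ennreal"
  assumes n: "0 < n" and sum: "(\<Sum>i<n. T i) = ennreal (real n * s)"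
  shows "\<exists>i<n. s \<le> enn2real (T i)"
proof (rule ccontr)
  have fin: "T i < \<infinity>" if "i < n" for i
  proof -
    have "T i \<le> (\<Sum>i<n. T i)"
      by (rule member_le_sum) (use that in auto)
    then show ?thesis
      unfolding sum by (simp add: le_less_trans)
  qed
  assume "\<not> (\<exists>i<n. s \<le> enn2real (T i))"
  then have "(\<Sum>i<n. enn2real (T i)) < (\<Sum>i<n. s)"
    using n by (intro sum_strict_mono) (auto simp: not_le)
  also have "\<dots> \<le> enn2real (\<Sum>i<n. T i)"
    unfolding sum by (cases "0 \<le> real n * s") (auto simp: ennreal_neg)
  also have "\<dots> = (\<Sum>i<n. enn2real (T i))"
    using fin by (subst enn2real_sum) (auto simp: comp_def)
  finally show False
    by simp
qed

lemma divide_le_mult_divide: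
  fixes q p p' K :: real
  assumes "0 \<le> q" "0 < p" "0 < p'" "p' \<le> K * p"
  shows "q / p \<le> K * (q / p')"
proof -
  have K: "0 < K"
    using assms(2-4) by (smt (verit) mult_nonpos_nonneg)
  have "q / p = (K * q) / (K * p)"
    using K by simp
  also have "\<dots> \<le> (K * q) / p'"
    using assms K by (intro frac_le) auto
  finally show ?thesis
    by simp
qed

section \<open>Problem instances and the two-point bound\<close>

lemma KL_le_refl:
  assumes "prob_space M" "0 \<le> c"
  shows "KL_le M M c"
proof -
  interpret prob_space M by fact
  have "AE x in M. 1 = RN_deriv M M x"
    by (rule RN_deriv_unique) (auto simp: density_1)
  then have "AE x in M. 0 = ln (enn2real (RN_deriv M M x))"
    by eventually_elim simp
  then have "integrable M (\<lambda>x. ln (enn2real (RN_deriv M M x)))"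
    by (intro integrable_cong_AE_imp[OF integrable_zero]) auto
  then show ?thesis
    using KL_same_eq_0 assms(2) unfolding KL_le_def absolutely_continuous_def by simp
qed

lemma noise_var_nonneg: "0 \<le> noise_var Gam x a"
  unfolding noise_var_def by (intro integral_nonneg_AE AE_I2) simp

lemma tau_shift:
  assumes sfA: "sigma_finite_measure MA" and Xi: "sets Xi = sets MX"
    and tau: "tau_defined MA g Xi Gam"
    and mean_meas: "(\<lambda>(x, a). g x a * cond_mean Gam x a) \<in> borel_measurable (MX \<Otimes>\<^sub>M MA)"
    and shift: "\<And>x a. x \<in> space MX \<Longrightarrow> a \<in> space MA \<Longrightarrow>
        g x a * cond_mean Gam' x a = g x a * cond_mean Gam x a + w x a"
    and w_meas: "(\<lambda>(x, a). w x a) \<in> borel_measurable (MX \<Otimes>\<^sub>M MA)"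
    and w_nonneg: "\<And>x a. x \<in> space MX \<Longrightarrow> a \<in> space MA \<Longrightarrow> 0 \<le> w x a"
    and fin: "(\<integral>\<^sup>+x. \<integral>\<^sup>+a. ennreal (w x a) \<partial>MA \<partial>Xi) < \<infinity>"
  shows "tau_defined MA g Xi Gam'"
    and "tau MA g Xi Gam' = tau MA g Xi Gam + enn2real (\<integral>\<^sup>+x. \<integral>\<^sup>+a. ennreal (w x a) \<partial>MA \<partial>Xi)"
proof -
  have w: "AE x in Xi. integrable MA (w x)" "integrable Xi (\<lambda>x. \<integral>a. w x a \<partial>MA)"
    "(\<integral>x. \<integral>a. w x a \<partial>MA \<partial>Xi) = enn2real (\<integral>\<^sup>+x. \<integral>\<^sup>+a. ennreal (w x a) \<partial>MA \<partial>Xi)"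
    using iterated_integral_nonneg[OF sfA Xi w_meas _ fin] w_nonneg by blast+
  define I where "I x = (\<integral>a. g x a * cond_mean Gam x a \<partial>MA)" for x
  define I' where "I' x = (\<integral>a. g x a * cond_mean Gam' x a \<partial>MA)" for x
  define Iw where "Iw x = (\<integral>a. w x a \<partial>MA)" for x
  have space_Xi: "space Xi = space MX"
    using sets_eq_imp_space_eq[OF Xi] .
  have I_int: "AE x in Xi. integrable MA (\<lambda>a. g x a * cond_mean Gam x a)" "integrable Xi I"
    using tau unfolding tau_defined_def I_def[abs_def] by auto
  have I'_eq: "I' x = (\<integral>a. g x a * cond_mean Gam x a + w x a \<partial>MA)" if "x \<in> space MX" for x
    unfolding I'_def using shift[OF that] by (rule Bochner_Integration.integral_cong[OF refl])
  have "(\<lambda>x. \<integral>a. g x a * cond_mean Gam x a + w x a \<partial>MA) \<in> borel_measurable MX"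
    using mean_meas w_meas
    by (intro sigma_finite_measure.borel_measurable_lebesgue_integral[OF sfA]) (simp add: case_prod_beta')
  then have I'_meas: "I' \<in> borel_measurable Xi"
    by (subst measurable_cong[OF I'_eq]) (simp_all add: measurable_cong_sets[OF Xi refl] space_Xi)
  have AE_int: "AE x in Xi. integrable MA (\<lambda>a. g x a * cond_mean Gam' x a) \<and> I' x = I x + Iw x"
    using I_int(1) w(1) AE_space
  proof eventually_elim
    case (elim x)
    then have x: "x \<in> space MX"
      by (simp add: space_Xi)
    have "integrable MA (\<lambda>a. g x a * cond_mean Gam x a + w x a)"
      using elim by simp
    then show ?case
      using elim by (simp add: I'_eq[OF x] I_def Iw_def Bochner_Integration.integrable_cong[OF refl shift[OF x]])
  qed
  have sum_int: "integrable Xi (\<lambda>x. I x + Iw x)"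
    using I_int(2) w(2) unfolding Iw_def by simp
  have "integrable Xi I'"
    by (rule integrable_cong_AE_imp[OF sum_int I'_meas]) (use AE_int in \<open>eventually_elim, simp\<close>)
  moreover have "AE x in Xi. integrable MA (\<lambda>a. g x a * cond_mean Gam' x a)"
    using AE_int by eventually_elim simp
  ultimately show "tau_defined MA g Xi Gam'"
    unfolding tau_defined_def I'_def[abs_def] by simp
  have "tau MA g Xi Gam' = (\<integral>x. I' x \<partial>Xi)"
    unfolding Defs.tau_def I'_def ..
  also have "\<dots> = (\<integral>x. I x + Iw x \<partial>Xi)"
    by (rule integral_cong_AE[OF I'_meas borel_measurable_integrable[OF sum_int]])
      (use AE_int in \<open>eventually_elim, simp\<close>)
  also have "\<dots> = tau MA g Xi Gam + enn2real (\<integral>\<^sup>+x. \<integral>\<^sup>+a. ennreal (w x a) \<partial>MA \<partial>Xi)"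
    using I_int(2) w(2,3) unfolding Defs.tau_def I_def Iw_def by simp
  finally show "tau MA g Xi Gam' = tau MA g Xi Gam + enn2real (\<integral>\<^sup>+x. \<integral>\<^sup>+a. ennreal (w x a) \<partial>MA \<partial>Xi)" .
qed

lemma two_point_risk_bound:
  fixes est :: "'b \<Rightarrow> real"
  assumes P: "prob_space P" and est: "est \<in> borel_measurable P"
    and dom: "ennreal (1 / 2) * (\<integral>\<^sup>+\<omega>. ennreal ((est \<omega> - t1)\<^sup>2) \<partial>P) \<le> (\<integral>\<^sup>+\<omega>. ennreal ((est \<omega> - t1)\<^sup>2) \<partial>Q)"
    and R0: "(\<integral>\<^sup>+\<omega>. ennreal ((est \<omega> - t0)\<^sup>2) \<partial>P) \<le> S"
    and R1: "(\<integral>\<^sup>+\<omega>. ennreal ((est \<omega> - t1)\<^sup>2) \<partial>Q) \<le> S"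
  shows "ennreal ((t1 - t0)\<^sup>2 / 6) \<le> S"
proof -
  have sq_meas: "(\<lambda>\<omega>. ennreal ((est \<omega> - t)\<^sup>2)) \<in> borel_measurable P" for t
    using est by measurable
  have pointwise: "(t1 - t0)\<^sup>2 / 2 \<le> (u - t0)\<^sup>2 + (u - t1)\<^sup>2" for u :: real
  proof -
    have "(u - t0)\<^sup>2 + (u - t1)\<^sup>2 - (t1 - t0)\<^sup>2 / 2 = (2 * u - t0 - t1)\<^sup>2 / 2"
      by (simp add: power2_eq_square field_simps)
    then show ?thesis
      by (smt (verit) zero_le_power2 divide_nonneg_pos)
  qed
  have "(\<integral>\<^sup>+\<omega>. ennreal ((est \<omega> - t1)\<^sup>2) \<partial>P) = 2 * (ennreal (1 / 2) * (\<integral>\<^sup>+\<omega>. ennreal ((est \<omega> - t1)\<^sup>2) \<partial>P))"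
  proof -
    have "2 * ennreal (1 / 2) = 1"
      using ennreal_mult'[of 2 "1 / 2"] by simp
    then show ?thesis
      by (simp add: mult.assoc[symmetric])
  qed
  also have "\<dots> \<le> 2 * S"
    using dom R1 by (intro mult_left_mono) auto
  finally have R1P: "(\<integral>\<^sup>+\<omega>. ennreal ((est \<omega> - t1)\<^sup>2) \<partial>P) \<le> 2 * S" .
  have "3 * ennreal ((t1 - t0)\<^sup>2 / 6) = ennreal ((t1 - t0)\<^sup>2 / 2)"
    using ennreal_mult'[of 3 "(t1 - t0)\<^sup>2 / 6"] by simp
  also have "\<dots> = (\<integral>\<^sup>+\<omega>. ennreal ((t1 - t0)\<^sup>2 / 2) \<partial>P)"
    using prob_space.emeasure_space_1[OF P] by simp
  also have "\<dots> \<le> (\<integral>\<^sup>+\<omega>. ennreal ((est \<omega> - t0)\<^sup>2) + ennreal ((est \<omega> - t1)\<^sup>2) \<partial>P)"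
    using pointwise by (intro nn_integral_mono) (simp add: ennreal_plus[symmetric] del: ennreal_plus)
  also have "\<dots> \<le> S + 2 * S"
    unfolding nn_integral_add[OF sq_meas sq_meas] using R0 R1P by (rule add_mono)
  also have "\<dots> = (1 + 2) * S"
    by (simp only: distrib_right mult_1_left)
  also have "\<dots> = 3 * S"
    by simp
  finally show ?thesis
    by (subst (asm) ennreal_mult_le_mult_iff) auto
qed

section \<open>Adaptively collected data\<close>

type_synonym ('x, 'a) history = "nat \<Rightarrow> 'x \<times> 'a \<times> real"

locale adaptive_design =
  fixes MX :: "'x measure" and MA :: "'a measure"
    and pol :: "nat \<Rightarrow> 'x \<Rightarrow> ('x, 'a) history \<Rightarrow> 'a \<Rightarrow> real"
    and Xi :: "'x measure" and n :: nat
  assumes sfA: "sigma_finite_measure MA"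
    and pol_meas: "\<And>i. i < n \<Longrightarrow>
        (\<lambda>(x, h, a). pol i x h a) \<in> borel_measurable (MX \<Otimes>\<^sub>M (hist_space MX MA i \<Otimes>\<^sub>M MA))"
    and pol_dens: "\<And>i x h. i < n \<Longrightarrow> x \<in> space MX \<Longrightarrow> h \<in> space (hist_space MX MA i) \<Longrightarrow>
        (\<integral>\<^sup>+ a. ennreal (pol i x h a) \<partial>MA) = 1"
    and Xi_prob: "prob_space Xi" and Xi_sets: "sets Xi = sets MX"
begin

abbreviation "H \<equiv> hist_space MX MA"

abbreviation "law \<equiv> data_law MX MA pol Xi"

lemma space_Xi: "space Xi = space MX"
  using sets_eq_imp_space_eq[OF Xi_sets] .

abbreviation outcome_kernel :: "('x \<Rightarrow> 'a \<Rightarrow> real measure) \<Rightarrow> bool" where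
  "outcome_kernel Gam \<equiv> (\<lambda>(x, a). Gam x a) \<in> MX \<Otimes>\<^sub>M MA \<rightarrow>\<^sub>M prob_algebra borel"

definition outcome_step :: "('x \<Rightarrow> 'a \<Rightarrow> real measure) \<Rightarrow> nat \<Rightarrow> ('x, 'a) history \<Rightarrow> 'x \<Rightarrow> 'a
    \<Rightarrow> ('x, 'a) history measure" where
  "outcome_step Gam k h x a = Gam x a \<bind> (\<lambda>y. return (H (Suc k)) (h(k := (x, a, y))))"

definition action_step :: "('x \<Rightarrow> 'a \<Rightarrow> real measure) \<Rightarrow> nat \<Rightarrow> ('x, 'a) history \<Rightarrow> 'x
    \<Rightarrow> ('x, 'a) history measure" where
  "action_step Gam k h x = density MA (\<lambda>a. ennreal (pol k x h a)) \<bind> outcome_step Gam k h x"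

definition round_kernel :: "('x \<Rightarrow> 'a \<Rightarrow> real measure) \<Rightarrow> nat \<Rightarrow> ('x, 'a) history
    \<Rightarrow> ('x, 'a) history measure" where
  "round_kernel Gam k h = Xi \<bind> action_step Gam k h"

lemma data_law_Suc: "law Gam (Suc k) = law Gam k \<bind> round_kernel Gam k"
  by (simp add: round_kernel_def[abs_def] action_step_def[abs_def] outcome_step_def[abs_def])

lemma pol_meas':
  assumes "k < n"
  shows "(\<lambda>(p, a). ennreal (pol k (snd p) (fst p) a)) \<in> borel_measurable ((H k \<Otimes>\<^sub>M MX) \<Otimes>\<^sub>M MA)"
proof -
  have "(\<lambda>(x, h, a). pol k x h a) \<circ> (\<lambda>q. (snd (fst q), (fst (fst q), snd q)))
      \<in> borel_measurable ((H k \<Otimes>\<^sub>M MX) \<Otimes>\<^sub>M MA)"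
    by (rule measurable_comp[OF _ pol_meas[OF assms]]) measurable
  then show ?thesis
    by (simp add: comp_def case_prod_beta')
qed

lemma measurable_pol_section:
  assumes "k < n" "h \<in> space (H k)" "x \<in> space MX"
  shows "(\<lambda>a. ennreal (pol k x h a)) \<in> borel_measurable MA"
  using measurable_Pair2[OF pol_meas'[OF assms(1)], of "(h, x)"] assms(2,3) by (simp add: space_pair_measure)

lemma measurable_policy_density:
  assumes "k < n"
  shows "(\<lambda>p. density MA (\<lambda>a. ennreal (pol k (snd p) (fst p) a))) \<in> H k \<Otimes>\<^sub>M MX \<rightarrow>\<^sub>M prob_algebra MA"
  using pol_meas'[OF assms] pol_dens[OF assms]
  by (intro measurable_density_prob_algebra[OF sfA]) (auto simp: space_pair_measure)

lemma measurable_history_update: "(\<lambda>p. (fst (fst (fst p)))(k := (snd (fst (fst p)), snd (fst p), snd p)))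
   \<in> ((H k \<Otimes>\<^sub>M MX) \<Otimes>\<^sub>M MA) \<Otimes>\<^sub>M borel \<rightarrow>\<^sub>M H (Suc k)"
  unfolding hist_space_def obs_space_def
  by (rule measurable_fun_upd[where J="{..<k}"]) (auto, measurable)

lemma measurable_return_update:
  "(\<lambda>(p, y). return (H (Suc k)) ((fst (fst p))(k := (snd (fst p), snd p, y))))
     \<in> ((H k \<Otimes>\<^sub>M MX) \<Otimes>\<^sub>M MA) \<Otimes>\<^sub>M borel \<rightarrow>\<^sub>M prob_algebra (H (Suc k))"
proof -
  have "return (H (Suc k)) \<circ> (\<lambda>p. (fst (fst (fst p)))(k := (snd (fst (fst p)), snd (fst p), snd p)))
     \<in> ((H k \<Otimes>\<^sub>M MX) \<Otimes>\<^sub>M MA) \<Otimes>\<^sub>M borel \<rightarrow>\<^sub>M prob_algebra (H (Suc k))"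
    by (rule measurable_comp[OF measurable_history_update measurable_return_prob_space])
  then show ?thesis
    by (simp add: comp_def case_prod_beta')
qed

lemma outcome_kernel_space:
  assumes Gm: "outcome_kernel Gam"
    and "x \<in> space MX" "a \<in> space MA"
  shows "sets (Gam x a) = sets borel" "prob_space (Gam x a)" "space (Gam x a) = UNIV"
proof -
  have "Gam x a \<in> space (prob_algebra borel)"
    using measurable_space[OF Gm, of "(x, a)"] assms by (simp add: space_pair_measure)
  then show "sets (Gam x a) = sets borel" "prob_space (Gam x a)"
    by (auto simp: space_prob_algebra)
  then show "space (Gam x a) = UNIV"
    using sets_eq_imp_space_eq by fastforce
qed

lemma measurable_outcome_step:
  assumes Gm: "outcome_kernel Gam"
  shows "(\<lambda>p. outcome_step Gam k (fst (fst p)) (snd (fst p)) (snd p))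
     \<in> (H k \<Otimes>\<^sub>M MX) \<Otimes>\<^sub>M MA \<rightarrow>\<^sub>M prob_algebra (H (Suc k))"
  unfolding outcome_step_def
proof (rule measurable_bind_prob_space2[where N=borel])
  have "(\<lambda>(x, a). Gam x a) \<circ> (\<lambda>p. (snd (fst p), snd p)) \<in> (H k \<Otimes>\<^sub>M MX) \<Otimes>\<^sub>M MA \<rightarrow>\<^sub>M prob_algebra borel"
    by (rule measurable_comp[OF _ Gm]) measurable
  then show "(\<lambda>p. Gam (snd (fst p)) (snd p)) \<in> (H k \<Otimes>\<^sub>M MX) \<Otimes>\<^sub>M MA \<rightarrow>\<^sub>M prob_algebra borel"
    by (simp add: comp_def)
  show "(\<lambda>(p, y). return (H (Suc k)) ((fst (fst p))(k := (snd (fst p), snd p, y))))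
     \<in> ((H k \<Otimes>\<^sub>M MX) \<Otimes>\<^sub>M MA) \<Otimes>\<^sub>M borel \<rightarrow>\<^sub>M prob_algebra (H (Suc k))"
    by (rule measurable_return_update)
qed

lemma measurable_action_step:
  assumes k: "k < n" and Gm: "outcome_kernel Gam"
  shows "(\<lambda>p. action_step Gam k (fst p) (snd p)) \<in> H k \<Otimes>\<^sub>M MX \<rightarrow>\<^sub>M prob_algebra (H (Suc k))"
  unfolding action_step_def
proof (rule measurable_bind_prob_space2[where N=MA])
  show "(\<lambda>p. density MA (\<lambda>a. ennreal (pol k (snd p) (fst p) a))) \<in> H k \<Otimes>\<^sub>M MX \<rightarrow>\<^sub>M prob_algebra MA"
    by (rule measurable_policy_density[OF k])
  show "(\<lambda>(p, a). outcome_step Gam k (fst p) (snd p) a) \<in> (H k \<Otimes>\<^sub>M MX) \<Otimes>\<^sub>M MA \<rightarrow>\<^sub>M prob_algebra (H (Suc k))"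
    using measurable_outcome_step[OF Gm, of k] by (simp add: case_prod_beta')
qed

lemma measurable_round_kernel:
  assumes k: "k < n" and Gm: "outcome_kernel Gam"
  shows "round_kernel Gam k \<in> H k \<rightarrow>\<^sub>M prob_algebra (H (Suc k))"
  unfolding round_kernel_def[abs_def]
proof (rule measurable_bind_prob_space2[where N=MX])
  show "(\<lambda>h. Xi) \<in> H k \<rightarrow>\<^sub>M prob_algebra MX"
    using Xi_prob Xi_sets by (auto intro!: measurable_const simp: space_prob_algebra)
  show "(\<lambda>(h, x). action_step Gam k h x) \<in> H k \<Otimes>\<^sub>M MX \<rightarrow>\<^sub>M prob_algebra (H (Suc k))"
    using measurable_action_step[OF k Gm] by (simp add: case_prod_beta')
qed

lemma data_law_in_prob_algebra:
  assumes Gm: "outcome_kernel Gam"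
  shows "k \<le> n \<Longrightarrow> law Gam k \<in> space (prob_algebra (H k))"
proof (induction k)
  case 0
  show ?case by (auto simp: space_prob_algebra hist_space_def space_PiM intro!: prob_space_return)
next
  case (Suc k)
  then have k: "k < n" by simp
  have "(\<lambda>_. law Gam k \<bind> round_kernel Gam k) \<in> count_space UNIV \<rightarrow>\<^sub>M prob_algebra (H (Suc k))"
    by (rule measurable_bind_prob_space[OF measurable_const measurable_round_kernel[OF k Gm]]) (use Suc in simp)
  then have "law Gam k \<bind> round_kernel Gam k \<in> space (prob_algebra (H (Suc k)))"
    by (rule measurable_space[where x=undefined]) simp
  then show ?case by (simp only: data_law_Suc)
qed

lemma nn_integral_round_kernel:
  assumes k: "k < n" and Gm: "outcome_kernel Gam"
    and h: "h \<in> space (H k)" and F: "F \<in> borel_measurable (H (Suc k))"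
  shows "(\<integral>\<^sup>+\<omega>. F \<omega> \<partial>round_kernel Gam k h) =
     (\<integral>\<^sup>+x. \<integral>\<^sup>+a. ennreal (pol k x h a) * (\<integral>\<^sup>+y. F (h(k := (x, a, y))) \<partial>Gam x a) \<partial>MA \<partial>Xi)"
proof -
  have action: "action_step Gam k h \<in> Xi \<rightarrow>\<^sub>M subprob_algebra (H (Suc k))"
    using measurable_Pair2[OF measurable_prob_algebraD[OF measurable_action_step[OF k Gm]] h]
    by (simp add: measurable_cong_sets[OF Xi_sets refl])
  have outcome: "outcome_step Gam k h x \<in> density MA (\<lambda>a. ennreal (pol k x h a)) \<rightarrow>\<^sub>M subprob_algebra (H (Suc k))"
    if x: "x \<in> space MX" for x
    using measurable_Pair2[OF measurable_prob_algebraD[OF measurable_outcome_step[OF Gm, of k]], of "(h, x)"] h x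
    by (simp add: space_pair_measure measurable_cong_sets[OF sets_density refl])
  have outcome_integral: "(\<integral>\<^sup>+\<omega>. F \<omega> \<partial>outcome_step Gam k h x a) = (\<integral>\<^sup>+y. F (h(k := (x, a, y))) \<partial>Gam x a)"
    if x: "x \<in> space MX" and a: "a \<in> space MA" for x a
  proof -
    have "(\<lambda>y. return (H (Suc k)) (h(k := (x, a, y)))) \<in> Gam x a \<rightarrow>\<^sub>M subprob_algebra (H (Suc k))"
      using measurable_Pair2[OF measurable_prob_algebraD[OF measurable_return_update[of k]], of "((h, x), a)"] h x a
      by (simp add: space_pair_measure measurable_cong_sets[OF outcome_kernel_space(1)[OF Gm x a] refl])
    moreover have "h(k := (x, a, y)) \<in> space (H (Suc k))" for y
      using measurable_space[OF measurable_history_update[of k], of "(((h, x), a), y)"] h x a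
      by (simp add: space_pair_measure)
    ultimately show ?thesis
      unfolding outcome_step_def using F by (simp add: nn_integral_bind[OF F] nn_integral_return)
  qed
  have "(\<integral>\<^sup>+\<omega>. F \<omega> \<partial>round_kernel Gam k h) = (\<integral>\<^sup>+x. \<integral>\<^sup>+\<omega>. F \<omega> \<partial>action_step Gam k h x \<partial>Xi)"
    unfolding round_kernel_def by (rule nn_integral_bind[OF F action])
  also have "\<dots> = (\<integral>\<^sup>+x. \<integral>\<^sup>+a. ennreal (pol k x h a) * (\<integral>\<^sup>+\<omega>. F \<omega> \<partial>outcome_step Gam k h x a) \<partial>MA \<partial>Xi)"
  proof (rule nn_integral_cong)
    fix x assume "x \<in> space Xi"
    then have x: "x \<in> space MX"
      by (simp add: space_Xi)
    have "(\<lambda>a. \<integral>\<^sup>+\<omega>. F \<omega> \<partial>outcome_step Gam k h x a) \<in> borel_measurable MA"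
      using measurable_compose[OF outcome[OF x] nn_integral_measurable_subprob_algebra[OF F]]
      by (simp add: measurable_cong_sets[OF sets_density refl])
    then show "(\<integral>\<^sup>+\<omega>. F \<omega> \<partial>action_step Gam k h x)
        = (\<integral>\<^sup>+a. ennreal (pol k x h a) * (\<integral>\<^sup>+\<omega>. F \<omega> \<partial>outcome_step Gam k h x a) \<partial>MA)"
      unfolding action_step_def nn_integral_bind[OF F outcome[OF x]]
      by (rule nn_integral_density[OF measurable_pol_section[OF k h x]])
  qed
  also have "\<dots> = (\<integral>\<^sup>+x. \<integral>\<^sup>+a. ennreal (pol k x h a) * (\<integral>\<^sup>+y. F (h(k := (x, a, y))) \<partial>Gam x a) \<partial>MA \<partial>Xi)"
    by (intro nn_integral_cong) (simp add: outcome_integral space_Xi)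
  finally show ?thesis .
qed

lemma
  assumes "outcome_kernel Gam" and "k \<le> n"
  shows sets_data_law: "sets (law Gam k) = sets (H k)"
    and prob_space_data_law: "prob_space (law Gam k)"
    and space_data_law: "space (law Gam k) = space (H k)"
proof -
  show sets: "sets (law Gam k) = sets (H k)" and "prob_space (law Gam k)"
    using data_law_in_prob_algebra[OF assms] by (auto simp: space_prob_algebra)
  show "space (law Gam k) = space (H k)"
    using sets_eq_imp_space_eq[OF sets] .
qed

lemma nn_integral_data_law_Suc:
  assumes k: "k < n"
  assumes Gm: "outcome_kernel Gam"
    and F: "F \<in> borel_measurable (H (Suc k))"
  shows "(\<integral>\<^sup>+\<omega>. F \<omega> \<partial>law Gam (Suc k)) =
     (\<integral>\<^sup>+h. (\<integral>\<^sup>+\<omega>. F \<omega> \<partial>round_kernel Gam k h) \<partial>law Gam k)"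
proof -
  have "round_kernel Gam k \<in> law Gam k \<rightarrow>\<^sub>M subprob_algebra (H (Suc k))"
    using measurable_prob_algebraD[OF measurable_round_kernel[OF k Gm]]
    by (subst measurable_cong_sets[OF sets_data_law[OF Gm] refl]) (use k in auto)
  then show ?thesis
    unfolding data_law_Suc by (rule nn_integral_bind[OF F])
qed

lemma measurable_nn_integral_round_kernel:
  assumes k: "k < n"
  assumes Gm: "outcome_kernel Gam"
    and F: "F \<in> borel_measurable (H (Suc k))"
  shows "(\<lambda>h. \<integral>\<^sup>+\<omega>. F \<omega> \<partial>round_kernel Gam k h) \<in> borel_measurable (H k)"
  using measurable_compose[OF measurable_prob_algebraD[OF measurable_round_kernel[OF k Gm]] nn_integral_measurable_subprob_algebra[OF F]] .

lemma nn_integral_round_kernel_dominated: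
  assumes k: "k < n" and Gm: "outcome_kernel Gam" and Gm1: "outcome_kernel Gam1"
    and cmp: "\<And>x a G. x \<in> space MX \<Longrightarrow> a \<in> space MA \<Longrightarrow> G \<in> borel_measurable borel \<Longrightarrow>
      c * (\<integral>\<^sup>+y. G y \<partial>Gam x a) \<le> (\<integral>\<^sup>+y. G y \<partial>Gam1 x a)"
    and h: "h \<in> space (H k)" and F: "F \<in> borel_measurable (H (Suc k))"
  shows "c * (\<integral>\<^sup>+\<omega>. F \<omega> \<partial>round_kernel Gam k h) \<le> (\<integral>\<^sup>+\<omega>. F \<omega> \<partial>round_kernel Gam1 k h)"
proof -
  have sets: "sets (round_kernel Gam k h) = sets (H (Suc k))"
    using measurable_space[OF measurable_round_kernel[OF k Gm] h] by (simp add: space_prob_algebra)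
  have "F \<in> borel_measurable (round_kernel Gam k h)"
    using F by (simp add: measurable_cong_sets[OF sets refl])
  then have "c * (\<integral>\<^sup>+\<omega>. F \<omega> \<partial>round_kernel Gam k h) = (\<integral>\<^sup>+\<omega>. c * F \<omega> \<partial>round_kernel Gam k h)"
    by (rule nn_integral_cmult[symmetric])
  also have "\<dots> = (\<integral>\<^sup>+x. \<integral>\<^sup>+a. ennreal (pol k x h a) * (\<integral>\<^sup>+y. c * F (h(k := (x, a, y))) \<partial>Gam x a) \<partial>MA \<partial>Xi)"
    by (rule nn_integral_round_kernel[OF k Gm h borel_measurable_times_ennreal[OF borel_measurable_const F]])
  also have "\<dots> \<le> (\<integral>\<^sup>+x. \<integral>\<^sup>+a. ennreal (pol k x h a) * (\<integral>\<^sup>+y. F (h(k := (x, a, y))) \<partial>Gam1 x a) \<partial>MA \<partial>Xi)"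
  proof (intro nn_integral_mono mult_left_mono order.refl)
    fix x a assume "x \<in> space Xi" and a: "a \<in> space MA"
    then have x: "x \<in> space MX"
      by (simp add: space_Xi)
    have G: "(\<lambda>y. F (h(k := (x, a, y)))) \<in> borel_measurable borel"
      using measurable_compose[OF measurable_Pair2[OF measurable_history_update, of "((h, x), a)"] F] h x a
      by (simp add: space_pair_measure fun_upd_def)
    have "(\<integral>\<^sup>+y. c * F (h(k := (x, a, y))) \<partial>Gam x a) = c * (\<integral>\<^sup>+y. F (h(k := (x, a, y))) \<partial>Gam x a)"
      using G by (intro nn_integral_cmult) (simp add: measurable_cong_sets[OF outcome_kernel_space(1)[OF Gm x a] refl])
    also have "\<dots> \<le> (\<integral>\<^sup>+y. F (h(k := (x, a, y))) \<partial>Gam1 x a)"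
      by (rule cmp[OF x a G])
    finally show "(\<integral>\<^sup>+y. c * F (h(k := (x, a, y))) \<partial>Gam x a) \<le> (\<integral>\<^sup>+y. F (h(k := (x, a, y))) \<partial>Gam1 x a)" .
  qed simp
  also have "\<dots> = (\<integral>\<^sup>+\<omega>. F \<omega> \<partial>round_kernel Gam1 k h)"
    by (rule nn_integral_round_kernel[OF k Gm1 h F, symmetric])
  finally show ?thesis .
qed

lemma data_law_dominated:
  assumes Gm: "outcome_kernel Gam" and Gm1: "outcome_kernel Gam1"
    and cmp: "\<And>x a G. x \<in> space MX \<Longrightarrow> a \<in> space MA \<Longrightarrow> G \<in> borel_measurable borel \<Longrightarrow>
      c * (\<integral>\<^sup>+y. G y \<partial>Gam x a) \<le> (\<integral>\<^sup>+y. G y \<partial>Gam1 x a)"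
  shows "k \<le> n \<Longrightarrow> F \<in> borel_measurable (H k) \<Longrightarrow>
      c ^ k * (\<integral>\<^sup>+\<omega>. F \<omega> \<partial>law Gam k) \<le> (\<integral>\<^sup>+\<omega>. F \<omega> \<partial>law Gam1 k)"
proof (induction k arbitrary: F)
  case (Suc k)
  then have k: "k < n" and F: "F \<in> borel_measurable (H (Suc k))"
    by simp_all
  define I where "I Gam' h = (\<integral>\<^sup>+\<omega>. F \<omega> \<partial>round_kernel Gam' k h)" for Gam' h
  have I_meas: "(\<lambda>h. c * I Gam h) \<in> borel_measurable (H k)"
    unfolding I_def
    by (rule borel_measurable_times_ennreal[OF borel_measurable_const measurable_nn_integral_round_kernel[OF k Gm F]])
  have "c ^ Suc k * (\<integral>\<^sup>+\<omega>. F \<omega> \<partial>law Gam (Suc k)) = c ^ k * (\<integral>\<^sup>+h. c * I Gam h \<partial>law Gam k)"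
    unfolding nn_integral_data_law_Suc[OF k Gm F] I_def
    using measurable_nn_integral_round_kernel[OF k Gm F] k
    by (subst nn_integral_cmult) (simp_all add: measurable_cong_sets[OF sets_data_law[OF Gm] refl] mult_ac)
  also have "\<dots> \<le> (\<integral>\<^sup>+h. c * I Gam h \<partial>law Gam1 k)"
    using Suc.IH[OF _ I_meas] k by simp
  also have "\<dots> \<le> (\<integral>\<^sup>+h. I Gam1 h \<partial>law Gam1 k)"
  proof (rule nn_integral_mono)
    fix h assume "h \<in> space (law Gam1 k)"
    then have h: "h \<in> space (H k)"
      using space_data_law[OF Gm1, of k] k by simp
    show "c * I Gam h \<le> I Gam1 h"
      unfolding I_def by (rule nn_integral_round_kernel_dominated[OF k Gm Gm1 _ h F]) (rule cmp)
  qed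
  also have "\<dots> = (\<integral>\<^sup>+\<omega>. F \<omega> \<partial>law Gam1 (Suc k))"
    unfolding nn_integral_data_law_Suc[OF k Gm1 F] I_def ..
  finally show ?case .
qed simp

lemma nn_integral_round_kernel_const:
  assumes k: "k < n"
  assumes Gm: "outcome_kernel Gam"
    and h: "h \<in> space (H k)" and F: "F \<in> borel_measurable (H (Suc k))"
    and inv: "\<And>x a y. x \<in> space MX \<Longrightarrow> a \<in> space MA \<Longrightarrow> F (h(k := (x, a, y))) = c"
  shows "(\<integral>\<^sup>+\<omega>. F \<omega> \<partial>round_kernel Gam k h) = c"
proof -
  have "(\<integral>\<^sup>+\<omega>. F \<omega> \<partial>round_kernel Gam k h) =
     (\<integral>\<^sup>+x. \<integral>\<^sup>+a. ennreal (pol k x h a) * (\<integral>\<^sup>+y. F (h(k := (x, a, y))) \<partial>Gam x a) \<partial>MA \<partial>Xi)"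
    by (rule nn_integral_round_kernel[OF k Gm h F])
  also have "\<dots> = (\<integral>\<^sup>+x. c \<partial>Xi)"
  proof (rule nn_integral_cong)
    fix x assume "x \<in> space Xi"
    then have x: "x \<in> space MX" by (simp add: space_Xi)
    have "(\<integral>\<^sup>+a. ennreal (pol k x h a) * (\<integral>\<^sup>+y. F (h(k := (x, a, y))) \<partial>Gam x a) \<partial>MA)
        = (\<integral>\<^sup>+a. ennreal (pol k x h a) * c \<partial>MA)"
    proof (rule nn_integral_cong)
      fix a assume a: "a \<in> space MA"
      have "(\<integral>\<^sup>+y. F (h(k := (x, a, y))) \<partial>Gam x a) = (\<integral>\<^sup>+y. c \<partial>Gam x a)"
        by (rule nn_integral_cong) (simp add: inv[OF x a])
      also have "\<dots> = c"
        using prob_space.emeasure_space_1[OF outcome_kernel_space(2)[OF Gm x a]] by simp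
      finally show "ennreal (pol k x h a) * (\<integral>\<^sup>+y. F (h(k := (x, a, y))) \<partial>Gam x a) = ennreal (pol k x h a) * c" by simp
    qed
    also have "\<dots> = (\<integral>\<^sup>+a. ennreal (pol k x h a) \<partial>MA) * c"
      by (rule nn_integral_multc[OF measurable_pol_section[OF k h x]])
    also have "\<dots> = c" using pol_dens[OF k x h] by simp
    finally show "(\<integral>\<^sup>+a. ennreal (pol k x h a) * (\<integral>\<^sup>+y. F (h(k := (x, a, y))) \<partial>Gam x a) \<partial>MA) = c" .
  qed
  also have "\<dots> = c"
    using prob_space.emeasure_space_1[OF Xi_prob] by simp
  finally show ?thesis .
qed

lemma nn_integral_data_law_marginal:
  assumes Gm: "outcome_kernel Gam"
    and Pm: "\<And>m. i < m \<Longrightarrow> m \<le> n \<Longrightarrow> Phi \<in> borel_measurable (H m)"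
    and Pinv: "\<And>w j z. i < j \<Longrightarrow> Phi (w(j := z)) = Phi w"
    and m: "Suc i \<le> m" "m \<le> n"
  shows "(\<integral>\<^sup>+\<omega>. Phi \<omega> \<partial>law Gam m) = (\<integral>\<^sup>+\<omega>. Phi \<omega> \<partial>law Gam (Suc i))"
  using m(1)
proof (induction m rule: dec_induct)
  case base
  then show ?case by simp
next
  case (step m')
  then have k: "m' < n" using m by simp
  have "(\<integral>\<^sup>+\<omega>. Phi \<omega> \<partial>law Gam (Suc m')) =
     (\<integral>\<^sup>+h. (\<integral>\<^sup>+\<omega>. Phi \<omega> \<partial>round_kernel Gam m' h) \<partial>law Gam m')"
    by (rule nn_integral_data_law_Suc[OF k Gm Pm]) (use step k in auto)
  also have "\<dots> = (\<integral>\<^sup>+h. Phi h \<partial>law Gam m')"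
  proof (rule nn_integral_cong)
    fix h assume "h \<in> space (law Gam m')"
    then have h: "h \<in> space (H m')" using space_data_law[OF Gm, of m'] k by simp
    show "(\<integral>\<^sup>+\<omega>. Phi \<omega> \<partial>round_kernel Gam m' h) = Phi h"
      by (rule nn_integral_round_kernel_const[OF k Gm h Pm]) (use step k Pinv in auto)
  qed
  also have "\<dots> = (\<integral>\<^sup>+\<omega>. Phi \<omega> \<partial>law Gam (Suc i))"
    by (rule step.IH)
  finally show ?case .
qed

lemma measurable_outcome_kernel:
  assumes "outcome_kernel Gam"
  shows "(\<lambda>p. Gam (fst p) (snd p)) \<in> MX \<Otimes>\<^sub>M MA \<rightarrow>\<^sub>M subprob_algebra borel"
  using measurable_prob_algebraD[OF assms] by (simp add: case_prod_beta')

lemma measurable_cond_mean: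
  assumes "outcome_kernel Gam"
  shows "(\<lambda>p. cond_mean Gam (fst p) (snd p)) \<in> borel_measurable (MX \<Otimes>\<^sub>M MA)"
  unfolding cond_mean_def
  by (rule measurable_compose[OF measurable_outcome_kernel[OF assms] integral_measurable_subprob_algebra]) simp

lemma measurable_noise_var:
  assumes Gm: "outcome_kernel Gam"
  shows "(\<lambda>p. noise_var Gam (fst p) (snd p)) \<in> borel_measurable (MX \<Otimes>\<^sub>M MA)"
proof -
  have "(\<lambda>(p, y). ennreal ((y - cond_mean Gam (fst p) (snd p))\<^sup>2)) \<in> borel_measurable ((MX \<Otimes>\<^sub>M MA) \<Otimes>\<^sub>M borel)"
    using measurable_cond_mean[OF Gm] by measurable
  from nn_integral_measurable_subprob_algebra2[OF this measurable_outcome_kernel[OF Gm]]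
  have "(\<lambda>p. enn2real (\<integral>\<^sup>+y. ennreal ((y - cond_mean Gam (fst p) (snd p))\<^sup>2) \<partial>Gam (fst p) (snd p)))
      \<in> borel_measurable (MX \<Otimes>\<^sub>M MA)"
    by (rule borel_measurable_enn2real)
  then show ?thesis
  proof (rule measurable_cong[THEN iffD1, rotated])
    fix p assume "p \<in> space (MX \<Otimes>\<^sub>M MA)"
    then have sets: "sets (Gam (fst p) (snd p)) = sets borel"
      using outcome_kernel_space(1)[OF Gm] by (auto simp: space_pair_measure)
    show "enn2real (\<integral>\<^sup>+y. ennreal ((y - cond_mean Gam (fst p) (snd p))\<^sup>2) \<partial>Gam (fst p) (snd p))
        = noise_var Gam (fst p) (snd p)"
      unfolding noise_var_def
      by (rule integral_eq_nn_integral[symmetric]) (simp_all add: measurable_cong_sets[OF sets refl])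
  qed
qed

end

section \<open>The two-point construction\<close>

locale local_minimax_setting = adaptive_design MX MA pol Xis n
  for MX :: "'x measure" and MA :: "'a measure"
    and pol :: "nat \<Rightarrow> 'x \<Rightarrow> ('x, 'a) history \<Rightarrow> 'a \<Rightarrow> real"
    and Xis :: "'x measure" and n :: nat +
  fixes pbar :: "nat \<Rightarrow> 'x \<Rightarrow> 'a \<Rightarrow> real"
    and g \<delta> :: "'x \<Rightarrow> 'a \<Rightarrow> real"
    and Gams :: "'x \<Rightarrow> 'a \<Rightarrow> real measure"
    and K :: real
  assumes pol_nonneg: "\<And>i x h a. i < n \<Longrightarrow> x \<in> space MX \<Longrightarrow> h \<in> space (hist_space MX MA i) \<Longrightarrow>
        a \<in> space MA \<Longrightarrow> 0 \<le> pol i x h a"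
    and g_meas: "(\<lambda>(x, a). g x a) \<in> borel_measurable (MX \<Otimes>\<^sub>M MA)"
    and delta_nonneg: "\<And>x a. x \<in> space MX \<Longrightarrow> a \<in> space MA \<Longrightarrow> 0 \<le> \<delta> x a"
    and inst: "is_instance MX MA Xis Gams"
    and tau_def: "tau_defined MA g Xis Gams"
    and K_ge: "1 \<le> K"
    and pbar_meas: "\<And>i. i < n \<Longrightarrow> (\<lambda>(x, a). pbar i x a) \<in> borel_measurable (MX \<Otimes>\<^sub>M MA)"
    and pbar_nonneg: "\<And>i x a. i < n \<Longrightarrow> x \<in> space MX \<Longrightarrow> a \<in> space MA \<Longrightarrow> 0 \<le> pbar i x a"
    and ratio: "\<And>i x h a. i < n \<Longrightarrow> x \<in> space MX \<Longrightarrow> h \<in> space (hist_space MX MA i) \<Longrightarrow>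
        a \<in> space MA \<Longrightarrow> 1 / K \<le> pbar i x a / pol i x h a \<and> pbar i x a / pol i x h a \<le> K"
    and LN_pos: "0 < sigma_norm_sq MX MA pol g n Xis Gams"
    and LN_fin: "sigma_norm_sq MX MA pol g n Xis Gams < \<infinity>"
    and LN: "\<And>i x a. i < n \<Longrightarrow> x \<in> space MX \<Longrightarrow> a \<in> space MA \<Longrightarrow>
        sqrt (real n) * \<delta> x a \<ge>
          \<bar>g x a\<bar> * noise_var Gams x a /
            (pbar i x a * sqrt (enn2real (sigma_norm_sq MX MA pol g n Xis Gams)))"
begin

lemma Gams_kernel: "outcome_kernel Gams"
  and Gams_integrable: "\<And>x a. x \<in> space MX \<Longrightarrow> a \<in> space MA \<Longrightarrow> integrable (Gams x a) (\<lambda>y. y)"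
  using inst by (auto simp: is_instance_def)

lemma Gams_in_prob_algebra: "x \<in> space MX \<Longrightarrow> a \<in> space MA \<Longrightarrow> Gams x a \<in> space (prob_algebra borel)"
  using measurable_space[OF Gams_kernel, of "(x, a)"] by (simp add: space_pair_measure)

lemma K_pos: "0 < K"
  using K_ge by simp

lemma policy_ratio_bounds:
  assumes "i < n" "x \<in> space MX" "h \<in> space (H i)" "a \<in> space MA"
  shows "0 < pol i x h a" "0 < pbar i x a" "pbar i x a \<le> K * pol i x h a" "pol i x h a \<le> K * pbar i x a"
proof -
  have lower: "1 / K \<le> pbar i x a / pol i x h a" and upper: "pbar i x a / pol i x h a \<le> K"
    using ratio[OF assms] by auto
  have "pol i x h a \<noteq> 0"
    using lower K_pos by auto
  then show pol: "0 < pol i x h a"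
    using pol_nonneg[OF assms] by simp
  have "0 < pbar i x a / pol i x h a"
    using lower K_pos by (meson less_le_trans zero_less_divide_1_iff)
  then show "0 < pbar i x a"
    using pol by (simp add: zero_less_divide_iff)
  show "pbar i x a \<le> K * pol i x h a"
    using upper pol by (simp add: divide_le_eq)
  show "pol i x h a \<le> K * pbar i x a"
    using lower pol K_pos by (simp add: divide_le_eq le_divide_eq mult.commute)
qed

lemma measurable_weighted_variance:
  assumes "(\<lambda>(x, a). p x a) \<in> borel_measurable (MX \<Otimes>\<^sub>M MA)"
  shows "(\<lambda>(x, a). ennreal ((g x a)\<^sup>2 * noise_var Gams x a / p x a)) \<in> borel_measurable (MX \<Otimes>\<^sub>M MA)"
  using assms g_meas measurable_noise_var[OF Gams_kernel] by (simp add: case_prod_beta') measurable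

definition ipw_term :: "nat \<Rightarrow> ('x, 'a) history \<Rightarrow> ennreal" where
  "ipw_term i \<omega> = ennreal ((g (fst (\<omega> i)) (fst (snd (\<omega> i))))\<^sup>2 * noise_var Gams (fst (\<omega> i)) (fst (snd (\<omega> i)))
      / (pol i (fst (\<omega> i)) (restrict \<omega> {..<i}) (fst (snd (\<omega> i))))\<^sup>2)"

definition round_variance :: "nat \<Rightarrow> ennreal" where
  "round_variance i = (\<integral>\<^sup>+\<omega>. ipw_term i \<omega> \<partial>law Gams n)"

definition cond_round_variance :: "nat \<Rightarrow> ('x, 'a) history \<Rightarrow> ennreal" where
  "cond_round_variance i h = (\<integral>\<^sup>+x. \<integral>\<^sup>+a. ennreal ((g x a)\<^sup>2 * noise_var Gams x a / pol i x h a) \<partial>MA \<partial>Xis)"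

definition ref_round_variance :: "nat \<Rightarrow> ennreal" where
  "ref_round_variance i = (\<integral>\<^sup>+x. \<integral>\<^sup>+a. ennreal ((g x a)\<^sup>2 * noise_var Gams x a / pbar i x a) \<partial>MA \<partial>Xis)"

definition sigma_sq :: real where
  "sigma_sq = enn2real (sigma_norm_sq MX MA pol g n Xis Gams)"

lemma sigma_norm_sq_eq: "sigma_norm_sq MX MA pol g n Xis Gams = ennreal (1 / real n) * (\<Sum>i<n. round_variance i)"
  unfolding sigma_norm_sq_def round_variance_def ipw_term_def ..

lemma n_pos: "0 < n"
proof (rule ccontr)
  assume "\<not> 0 < n"
  then have "sigma_norm_sq MX MA pol g n Xis Gams = 0"
    unfolding sigma_norm_sq_eq by simp
  with LN_pos show False
    by simp
qed

lemma sigma_sq_pos: "0 < sigma_sq"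
  and sigma_norm_sq_real: "sigma_norm_sq MX MA pol g n Xis Gams = ennreal sigma_sq"
  using LN_pos LN_fin unfolding sigma_sq_def by (auto simp: enn2real_positive_iff less_top[symmetric])

lemma sum_round_variance: "(\<Sum>i<n. round_variance i) = ennreal (real n * sigma_sq)"
proof -
  have "ennreal (real n) * ennreal (1 / real n) = 1"
    using n_pos by (simp add: ennreal_mult'[symmetric])
  then have "(\<Sum>i<n. round_variance i) = ennreal (real n) * sigma_norm_sq MX MA pol g n Xis Gams"
    unfolding sigma_norm_sq_eq by (simp add: mult.assoc[symmetric])
  also have "\<dots> = ennreal (real n * sigma_sq)"
    by (simp add: sigma_norm_sq_real ennreal_mult')
  finally show ?thesis .
qed

lemma measurable_ipw_term:
  assumes im: "i < m" "m \<le> n"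
  shows "ipw_term i \<in> borel_measurable (H m)"
proof -
  have i: "i < n"
    using im by simp
  have obs: "(\<lambda>\<omega>. \<omega> i) \<in> H m \<rightarrow>\<^sub>M MX \<Otimes>\<^sub>M (MA \<Otimes>\<^sub>M borel)"
    unfolding hist_space_def obs_space_def by (rule measurable_component_singleton) (use im in simp)
  have x: "(\<lambda>\<omega>. fst (\<omega> i)) \<in> H m \<rightarrow>\<^sub>M MX" and a: "(\<lambda>\<omega>. fst (snd (\<omega> i))) \<in> H m \<rightarrow>\<^sub>M MA"
    using obs by measurable
  have h: "(\<lambda>\<omega>. restrict \<omega> {..<i}) \<in> H m \<rightarrow>\<^sub>M H i"
    unfolding hist_space_def by (rule measurable_restrict_subset) (use im in auto)
  have "(\<lambda>\<omega>. g (fst (\<omega> i)) (fst (snd (\<omega> i)))) \<in> borel_measurable (H m)"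
    using measurable_compose[OF measurable_Pair[OF x a] g_meas] by simp
  moreover have "(\<lambda>\<omega>. noise_var Gams (fst (\<omega> i)) (fst (snd (\<omega> i)))) \<in> borel_measurable (H m)"
    using measurable_compose[OF measurable_Pair[OF x a] measurable_noise_var[OF Gams_kernel]] by simp
  moreover have "(\<lambda>\<omega>. pol i (fst (\<omega> i)) (restrict \<omega> {..<i}) (fst (snd (\<omega> i)))) \<in> borel_measurable (H m)"
    using measurable_compose[OF measurable_Pair[OF x measurable_Pair[OF h a]] pol_meas[OF i]] by simp
  ultimately show ?thesis
    unfolding ipw_term_def[abs_def] by measurable
qed

lemma ipw_term_fun_upd:
  assumes "i < j"
  shows "ipw_term i (w(j := z)) = ipw_term i w"
proof -
  have "restrict (w(j := z)) {..<i} = restrict w {..<i}"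
    using assms by (auto simp: restrict_def)
  then show ?thesis
    using assms unfolding ipw_term_def by simp
qed

lemma nn_integral_ipw_term_round_kernel:
  assumes i: "i < n" and h: "h \<in> space (H i)"
  shows "(\<integral>\<^sup>+\<omega>. ipw_term i \<omega> \<partial>round_kernel Gams i h) = cond_round_variance i h"
proof -
  have restrict_upd: "restrict (h(i := v)) {..<i} = h" for v
    using h by (auto simp: hist_space_def space_PiM PiE_def extensional_def restrict_def fun_eq_iff)
  have "(\<integral>\<^sup>+\<omega>. ipw_term i \<omega> \<partial>round_kernel Gams i h) =
     (\<integral>\<^sup>+x. \<integral>\<^sup>+a. ennreal (pol i x h a) * (\<integral>\<^sup>+y. ipw_term i (h(i := (x, a, y))) \<partial>Gams x a) \<partial>MA \<partial>Xis)"
    using i by (intro nn_integral_round_kernel[OF i Gams_kernel h] measurable_ipw_term) auto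
  also have "\<dots> = cond_round_variance i h"
    unfolding cond_round_variance_def
  proof (intro nn_integral_cong)
    fix x a assume "x \<in> space Xis" and a: "a \<in> space MA"
    then have x: "x \<in> space MX"
      by (simp add: space_Xi)
    have p: "0 < pol i x h a"
      by (rule policy_ratio_bounds(1)[OF i x h a])
    have "(\<integral>\<^sup>+y. ipw_term i (h(i := (x, a, y))) \<partial>Gams x a)
        = ennreal ((g x a)\<^sup>2 * noise_var Gams x a / (pol i x h a)\<^sup>2)"
      using prob_space.emeasure_space_1[OF outcome_kernel_space(2)[OF Gams_kernel x a]]
      by (simp add: ipw_term_def restrict_upd)
    also have "ennreal (pol i x h a) * \<dots> = ennreal ((g x a)\<^sup>2 * noise_var Gams x a / pol i x h a)"
      using p by (simp add: ennreal_mult'[symmetric] power2_eq_square)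
    finally show "ennreal (pol i x h a) * (\<integral>\<^sup>+y. ipw_term i (h(i := (x, a, y))) \<partial>Gams x a)
        = ennreal ((g x a)\<^sup>2 * noise_var Gams x a / pol i x h a)" .
  qed
  finally show ?thesis .
qed

lemma round_variance_eq:
  assumes i: "i < n"
  shows "round_variance i = (\<integral>\<^sup>+h. cond_round_variance i h \<partial>law Gams i)"
proof -
  have "round_variance i = (\<integral>\<^sup>+\<omega>. ipw_term i \<omega> \<partial>law Gams (Suc i))"
    unfolding round_variance_def
    using i by (intro nn_integral_data_law_marginal[OF Gams_kernel] measurable_ipw_term ipw_term_fun_upd) auto
  also have "\<dots> = (\<integral>\<^sup>+h. (\<integral>\<^sup>+\<omega>. ipw_term i \<omega> \<partial>round_kernel Gams i h) \<partial>law Gams i)"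
    using i by (intro nn_integral_data_law_Suc[OF i Gams_kernel] measurable_ipw_term) auto
  also have "\<dots> = (\<integral>\<^sup>+h. cond_round_variance i h \<partial>law Gams i)"
    using i by (intro nn_integral_cong nn_integral_ipw_term_round_kernel) (simp_all add: space_data_law[OF Gams_kernel])
  finally show ?thesis .
qed

lemma measurable_pol_at_history:
  assumes i: "i < n" and h: "h \<in> space (H i)"
  shows "(\<lambda>(x, a). pol i x h a) \<in> borel_measurable (MX \<Otimes>\<^sub>M MA)"
proof -
  have "(\<lambda>p. (fst p, (h, snd p))) \<in> MX \<Otimes>\<^sub>M MA \<rightarrow>\<^sub>M MX \<Otimes>\<^sub>M (H i \<Otimes>\<^sub>M MA)"
    using h by (intro measurable_Pair measurable_const) auto
  from measurable_compose[OF this pol_meas[OF i]] show ?thesis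
    by (simp add: case_prod_beta')
qed

lemma cond_round_variance_bounds:
  assumes i: "i < n" and h: "h \<in> space (H i)"
  shows "cond_round_variance i h \<le> ennreal K * ref_round_variance i"
    and "ref_round_variance i \<le> ennreal K * cond_round_variance i h"
proof -
  have pointwise:
    "ennreal ((g x a)\<^sup>2 * noise_var Gams x a / pol i x h a) \<le> ennreal K * ennreal ((g x a)\<^sup>2 * noise_var Gams x a / pbar i x a)
     \<and> ennreal ((g x a)\<^sup>2 * noise_var Gams x a / pbar i x a) \<le> ennreal K * ennreal ((g x a)\<^sup>2 * noise_var Gams x a / pol i x h a)"
    if "x \<in> space Xis" "a \<in> space MA" for x a
  proof -
    have x: "x \<in> space MX"
      using that(1) by (simp add: space_Xi)
    note r = policy_ratio_bounds[OF i x h that(2)]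
    have v: "0 \<le> (g x a)\<^sup>2 * noise_var Gams x a"
      by (simp add: noise_var_nonneg)
    show ?thesis
      using divide_le_mult_divide[OF v r(1) r(2) r(3)] divide_le_mult_divide[OF v r(2) r(1) r(4)] K_pos
      by (simp add: ennreal_mult'[symmetric] ennreal_leI)
  qed
  have "cond_round_variance i h
      \<le> (\<integral>\<^sup>+x. \<integral>\<^sup>+a. ennreal K * ennreal ((g x a)\<^sup>2 * noise_var Gams x a / pbar i x a) \<partial>MA \<partial>Xis)"
    unfolding cond_round_variance_def using pointwise by (intro nn_integral_mono) blast
  also have "\<dots> = ennreal K * ref_round_variance i"
    unfolding ref_round_variance_def
    by (rule nn_integral_iterated_cmult[OF sfA Xi_sets measurable_weighted_variance[OF pbar_meas[OF i]]])
  finally show "cond_round_variance i h \<le> ennreal K * ref_round_variance i" .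
  have "ref_round_variance i
      \<le> (\<integral>\<^sup>+x. \<integral>\<^sup>+a. ennreal K * ennreal ((g x a)\<^sup>2 * noise_var Gams x a / pol i x h a) \<partial>MA \<partial>Xis)"
    unfolding ref_round_variance_def using pointwise by (intro nn_integral_mono) blast
  also have "\<dots> = ennreal K * cond_round_variance i h"
    unfolding cond_round_variance_def
    by (rule nn_integral_iterated_cmult[OF sfA Xi_sets measurable_weighted_variance[OF measurable_pol_at_history[OF i h]]])
  finally show "ref_round_variance i \<le> ennreal K * cond_round_variance i h" .
qed

lemma round_variance_le_ref:
  assumes i: "i < n"
  shows "round_variance i \<le> ennreal K * ref_round_variance i"
proof -
  have "round_variance i \<le> (\<integral>\<^sup>+h. ennreal K * ref_round_variance i \<partial>law Gams i)"
    unfolding round_variance_eq[OF i] using i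
    by (intro nn_integral_mono cond_round_variance_bounds(1)) (simp_all add: space_data_law[OF Gams_kernel])
  also have "\<dots> = ennreal K * ref_round_variance i"
    using prob_space.emeasure_space_1[OF prob_space_data_law[OF Gams_kernel]] i by simp
  finally show ?thesis .
qed

lemma ref_round_variance_le:
  assumes i: "i < n"
  shows "ref_round_variance i \<le> ennreal K * round_variance i"
proof -
  have "(\<lambda>h. \<integral>\<^sup>+\<omega>. ipw_term i \<omega> \<partial>round_kernel Gams i h) \<in> borel_measurable (H i)"
    using i by (intro measurable_nn_integral_round_kernel[OF i Gams_kernel] measurable_ipw_term) auto
  then have "cond_round_variance i \<in> borel_measurable (H i)"
    by (rule measurable_cong[THEN iffD1, rotated]) (simp add: nn_integral_ipw_term_round_kernel[OF i])
  then have meas: "cond_round_variance i \<in> borel_measurable (law Gams i)"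
    using i by (simp add: measurable_cong_sets[OF sets_data_law[OF Gams_kernel] refl])
  have "ref_round_variance i = (\<integral>\<^sup>+h. ref_round_variance i \<partial>law Gams i)"
    using prob_space.emeasure_space_1[OF prob_space_data_law[OF Gams_kernel]] i by simp
  also have "\<dots> \<le> (\<integral>\<^sup>+h. ennreal K * cond_round_variance i h \<partial>law Gams i)"
    using i by (intro nn_integral_mono cond_round_variance_bounds(2)) (simp_all add: space_data_law[OF Gams_kernel])
  also have "\<dots> = ennreal K * round_variance i"
    unfolding round_variance_eq[OF i] by (rule nn_integral_cmult[OF meas])
  finally show ?thesis .
qed

definition heavy_round :: nat where
  "heavy_round = (SOME i. i < n \<and> sigma_sq \<le> enn2real (round_variance i))"

lemma heavy_round: "heavy_round < n" "sigma_sq \<le> enn2real (round_variance heavy_round)"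
  using someI_ex[OF exists_ge_average[OF n_pos sum_round_variance]] unfolding heavy_round_def by auto

definition ref_variance :: real where
  "ref_variance = enn2real (ref_round_variance heavy_round)"

lemma ref_round_variance_finite: "ref_round_variance heavy_round < \<infinity>"
proof -
  have "round_variance heavy_round \<le> (\<Sum>i<n. round_variance i)"
    using heavy_round(1) by (intro member_le_sum) auto
  then have "round_variance heavy_round < \<infinity>"
    unfolding sum_round_variance by (simp add: le_less_trans)
  then show ?thesis
    using ref_round_variance_le[OF heavy_round(1)]
    by (simp add: ennreal_mult_less_top le_less_trans)
qed

lemma ref_variance_real: "ref_round_variance heavy_round = ennreal ref_variance"
  unfolding ref_variance_def using ref_round_variance_finite by simp

lemma sigma_sq_le_ref_variance: "sigma_sq \<le> K * ref_variance"
proof -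
  have "enn2real (round_variance heavy_round) \<le> enn2real (ennreal K * ref_round_variance heavy_round)"
    using round_variance_le_ref[OF heavy_round(1)] ref_round_variance_finite
    by (intro enn2real_mono) (simp_all add: ennreal_mult_less_top)
  also have "\<dots> = K * ref_variance"
    unfolding ref_variance_def using K_pos by (simp add: enn2real_mult)
  finally show ?thesis
    using heavy_round(2) by simp
qed

definition scale :: real where
  "scale = sqrt sigma_sq * sqrt (real n)"

definition mean_shift :: "'x \<Rightarrow> 'a \<Rightarrow> real" where
  "mean_shift x a = g x a * noise_var Gams x a / (pbar heavy_round x a * scale)"

definition mix_weight :: real where
  "mix_weight = 1 / (2 * real n)"

definition Gam_alt :: "'x \<Rightarrow> 'a \<Rightarrow> real measure" where
  "Gam_alt x a = bernoulli_mixture mix_weight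
     (return borel (cond_mean Gams x a + mean_shift x a / mix_weight)) (Gams x a)"

definition tau_gap :: real where
  "tau_gap = ref_variance / scale"

lemma scale_pos: "0 < scale"
  unfolding scale_def using sigma_sq_pos n_pos by simp

lemma mix_weight: "0 < mix_weight" "mix_weight \<le> 1" "real n * mix_weight = 1 / 2"
  unfolding mix_weight_def using n_pos by (auto simp: field_simps)

lemma measurable_mean_shift: "(\<lambda>p. mean_shift (fst p) (snd p)) \<in> borel_measurable (MX \<Otimes>\<^sub>M MA)"
  using g_meas measurable_noise_var[OF Gams_kernel] pbar_meas[OF heavy_round(1)]
  unfolding mean_shift_def by (simp add: case_prod_beta') measurable

lemma Gam_alt_kernel: "outcome_kernel Gam_alt"
proof -
  have "(\<lambda>p. cond_mean Gams (fst p) (snd p) + mean_shift (fst p) (snd p) / mix_weight) \<in> borel_measurable (MX \<Otimes>\<^sub>M MA)"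
    using measurable_cond_mean[OF Gams_kernel] measurable_mean_shift by measurable
  then have "(\<lambda>p. return borel (cond_mean Gams (fst p) (snd p) + mean_shift (fst p) (snd p) / mix_weight))
      \<in> MX \<Otimes>\<^sub>M MA \<rightarrow>\<^sub>M prob_algebra borel"
    by (rule measurable_compose[OF _ measurable_return_prob_space])
  moreover have "(\<lambda>p. Gams (fst p) (snd p)) \<in> MX \<Otimes>\<^sub>M MA \<rightarrow>\<^sub>M prob_algebra borel"
    using Gams_kernel by (simp add: case_prod_beta')
  ultimately show ?thesis
    using measurable_bernoulli_mixture by (simp add: Gam_alt_def case_prod_beta')
qed

lemma cond_mean_Gam_alt:
  assumes x: "x \<in> space MX" and a: "a \<in> space MA"
  shows "integrable (Gam_alt x a) (\<lambda>y. y)" "cond_mean Gam_alt x a = cond_mean Gams x a + mean_shift x a"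
proof -
  define M where "M = cond_mean Gams x a + mean_shift x a / mix_weight"
  have ret: "return borel M \<in> space (prob_algebra borel)" "integrable (return borel M) (\<lambda>y. y)"
    by (simp_all add: space_prob_algebra prob_space_return integrable_iff_bounded nn_integral_return)
  have w: "0 \<le> mix_weight" "mix_weight \<le> 1"
    using mix_weight by auto
  note mix = integral_bernoulli_mixture[OF ret(1) Gams_in_prob_algebra[OF x a] w ret(2) Gams_integrable[OF x a]]
  show "integrable (Gam_alt x a) (\<lambda>y. y)"
    unfolding Gam_alt_def M_def[symmetric] by (rule mix(1))
  have "cond_mean Gam_alt x a = (\<integral>y. y \<partial>bernoulli_mixture mix_weight (return borel M) (Gams x a))"
    unfolding cond_mean_def[of Gam_alt] Gam_alt_def M_def ..
  also have "\<dots> = mix_weight * M + (1 - mix_weight) * cond_mean Gams x a"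
    unfolding mix(2) by (simp add: integral_return cond_mean_def)
  also have "\<dots> = cond_mean Gams x a + mean_shift x a"
    unfolding M_def using mix_weight(1) by (simp add: field_simps)
  finally show "cond_mean Gam_alt x a = cond_mean Gams x a + mean_shift x a" .
qed

lemma mean_shift_le_delta:
  assumes x: "x \<in> space MX" and a: "a \<in> space MA"
  shows "\<bar>mean_shift x a\<bar> \<le> \<delta> x a"
proof -
  define bound where "bound = \<bar>g x a\<bar> * noise_var Gams x a / (pbar heavy_round x a * sqrt sigma_sq)"
  have LN': "bound \<le> sqrt (real n) * \<delta> x a"
    using LN[OF heavy_round(1) x a] unfolding bound_def sigma_sq_def .
  have "\<bar>mean_shift x a\<bar> = bound / sqrt (real n)"
    unfolding mean_shift_def scale_def bound_def
    using pbar_nonneg[OF heavy_round(1) x a] noise_var_nonneg[of Gams x a] sigma_sq_pos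
    by (simp add: abs_mult field_simps)
  also have "\<dots> \<le> \<delta> x a"
    using LN' n_pos by (simp add: divide_le_eq mult.commute)
  finally show ?thesis .
qed

lemma tau_Gam_alt: "tau_defined MA g Xis Gam_alt" "tau MA g Xis Gam_alt = tau MA g Xis Gams + tau_gap"
proof -
  define w where "w x a = 1 / scale * ((g x a)\<^sup>2 * noise_var Gams x a / pbar heavy_round x a)" for x a
  have mean_meas: "(\<lambda>(x, a). g x a * cond_mean Gams x a) \<in> borel_measurable (MX \<Otimes>\<^sub>M MA)"
    using g_meas measurable_cond_mean[OF Gams_kernel] by (simp add: case_prod_beta') measurable
  have shift: "g x a * cond_mean Gam_alt x a = g x a * cond_mean Gams x a + w x a"
    if "x \<in> space MX" "a \<in> space MA" for x a
    using cond_mean_Gam_alt(2)[OF that] by (simp add: w_def mean_shift_def power2_eq_square distrib_left mult_ac)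
  have w_meas: "(\<lambda>(x, a). w x a) \<in> borel_measurable (MX \<Otimes>\<^sub>M MA)"
    using g_meas measurable_noise_var[OF Gams_kernel] pbar_meas[OF heavy_round(1)]
    unfolding w_def by (simp add: case_prod_beta') measurable
  have w_nonneg: "0 \<le> w x a" if "x \<in> space MX" "a \<in> space MA" for x a
    using pbar_nonneg[OF heavy_round(1) that] noise_var_nonneg[of Gams x a] scale_pos by (simp add: w_def)
  have "(\<integral>\<^sup>+x. \<integral>\<^sup>+a. ennreal (w x a) \<partial>MA \<partial>Xis)
      = (\<integral>\<^sup>+x. \<integral>\<^sup>+a. ennreal (1 / scale) * ennreal ((g x a)\<^sup>2 * noise_var Gams x a / pbar heavy_round x a) \<partial>MA \<partial>Xis)"
    unfolding w_def using scale_pos by (simp add: ennreal_mult'[symmetric])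
  also have "\<dots> = ennreal (1 / scale) * ennreal ref_variance"
    unfolding ref_variance_real[symmetric] ref_round_variance_def
    by (rule nn_integral_iterated_cmult[OF sfA Xi_sets measurable_weighted_variance[OF pbar_meas[OF heavy_round(1)]]])
  also have "\<dots> = ennreal tau_gap"
    unfolding tau_gap_def using scale_pos by (simp add: ennreal_mult'[symmetric])
  finally have w_int: "(\<integral>\<^sup>+x. \<integral>\<^sup>+a. ennreal (w x a) \<partial>MA \<partial>Xis) = ennreal tau_gap" .
  have gap_nonneg: "0 \<le> tau_gap"
    unfolding tau_gap_def ref_variance_def using scale_pos by simp
  note shifted = tau_shift[OF sfA Xi_sets tau_def mean_meas _ w_meas _, unfolded w_int]
  show "tau_defined MA g Xis Gam_alt"
    by (rule shifted(1)) (simp_all add: shift w_nonneg)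
  show "tau MA g Xis Gam_alt = tau MA g Xis Gams + tau_gap"
    using gap_nonneg by (subst shifted(2)) (simp_all add: shift w_nonneg)
qed

lemma null_in_local_class: "(Xis, Gams) \<in> local_class MX MA g n \<delta> Xis Gams"
  unfolding local_class_def using inst tau_def KL_le_refl[OF Xi_prob] delta_nonneg by auto

lemma alt_in_local_class: "(Xis, Gam_alt) \<in> local_class MX MA g n \<delta> Xis Gams"
  unfolding local_class_def is_instance_def
  using Xi_prob Xi_sets Gam_alt_kernel cond_mean_Gam_alt tau_Gam_alt(1) KL_le_refl[OF Xi_prob] mean_shift_le_delta
  by auto

lemma data_law_Gam_alt_dominates:
  assumes F: "F \<in> borel_measurable (H n)"
  shows "ennreal (1 / 2) * (\<integral>\<^sup>+\<omega>. F \<omega> \<partial>law Gams n) \<le> (\<integral>\<^sup>+\<omega>. F \<omega> \<partial>law Gam_alt n)"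
proof -
  have w: "0 \<le> mix_weight" "mix_weight \<le> 1"
    using mix_weight by auto
  have cmp: "ennreal (1 - mix_weight) * (\<integral>\<^sup>+y. G y \<partial>Gams x a) \<le> (\<integral>\<^sup>+y. G y \<partial>Gam_alt x a)"
    if x: "x \<in> space MX" and a: "a \<in> space MA" and G: "G \<in> borel_measurable borel" for x a G
  proof -
    have ret: "return borel (cond_mean Gams x a + mean_shift x a / mix_weight) \<in> space (prob_algebra borel)"
      by (simp add: space_prob_algebra prob_space_return)
    show ?thesis
      unfolding Gam_alt_def nn_integral_bernoulli_mixture[OF ret Gams_in_prob_algebra[OF x a] w G]
      by (rule add_increasing[rotated]) simp_all
  qed
  have "1 + real n * (- mix_weight) \<le> (1 + (- mix_weight)) ^ n"
    using mix_weight by (intro Bernoulli_inequality) simp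
  then have "1 / 2 \<le> (1 - mix_weight) ^ n"
    using mix_weight(3) by simp
  then have "ennreal (1 / 2) \<le> ennreal ((1 - mix_weight) ^ n)"
    by (rule ennreal_leI)
  then have "ennreal (1 / 2) \<le> ennreal (1 - mix_weight) ^ n"
    using mix_weight by (simp add: ennreal_power)
  then have "ennreal (1 / 2) * (\<integral>\<^sup>+\<omega>. F \<omega> \<partial>law Gams n) \<le> ennreal (1 - mix_weight) ^ n * (\<integral>\<^sup>+\<omega>. F \<omega> \<partial>law Gams n)"
    by (rule mult_right_mono) simp
  also have "\<dots> \<le> (\<integral>\<^sup>+\<omega>. F \<omega> \<partial>law Gam_alt n)"
    by (rule data_law_dominated[OF Gams_kernel Gam_alt_kernel _ order.refl F]) (rule cmp)
  finally show ?thesis .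
qed

lemma risk_bound_le_gap: "1 / (8 * K ^ 4) * (sigma_sq / real n) \<le> tau_gap\<^sup>2 / 6"
proof -
  have "sqrt sigma_sq / (K * sqrt (real n)) = (sigma_sq / K) / scale"
    unfolding scale_def using sigma_sq_pos n_pos K_pos by (simp add: field_simps)
  also have "\<dots> \<le> tau_gap"
    unfolding tau_gap_def using sigma_sq_le_ref_variance K_pos scale_pos
    by (intro divide_right_mono) (simp_all add: divide_le_eq mult.commute)
  finally have "(sqrt sigma_sq / (K * sqrt (real n)))\<^sup>2 \<le> tau_gap\<^sup>2"
    using sigma_sq_pos K_pos by (intro power_mono) simp_all
  then have gap: "sigma_sq / (K\<^sup>2 * real n) \<le> tau_gap\<^sup>2"
    using sigma_sq_pos by (simp add: power_divide power_mult_distrib)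
  have "K\<^sup>2 \<le> K ^ 4"
    using K_ge by (simp add: power_increasing)
  moreover have "0 \<le> K ^ 4"
    by simp
  ultimately have "6 * K\<^sup>2 \<le> 8 * K ^ 4"
    by linarith
  then have "1 / (8 * K ^ 4) \<le> 1 / (6 * K\<^sup>2)"
    using K_pos by (intro frac_le) auto
  then have "1 / (8 * K ^ 4) * (sigma_sq / real n) \<le> 1 / (6 * K\<^sup>2) * (sigma_sq / real n)"
    using sigma_sq_pos by (intro mult_right_mono) auto
  also have "\<dots> \<le> tau_gap\<^sup>2 / 6"
    using gap by simp
  finally show ?thesis .
qed

theorem local_minimax_lower_bound:
  "ennreal (1 / (8 * K ^ 4) * (enn2real (sigma_norm_sq MX MA pol g n Xis Gams) / real n))
     \<le> local_minimax MX MA pol g n (local_class MX MA g n \<delta> Xis Gams)"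
  unfolding local_minimax_def
proof (rule INF_greatest)
  fix est :: "('x, 'a) history \<Rightarrow> real"
  assume est: "est \<in> borel_measurable (H n)"
  let ?C = "local_class MX MA g n \<delta> Xis Gams"
  let ?t0 = "tau MA g Xis Gams"
  have sq_meas: "(\<lambda>\<omega>. ennreal ((est \<omega> - t)\<^sup>2)) \<in> borel_measurable (H n)" for t
    using est by measurable
  have "ennreal (((?t0 + tau_gap) - ?t0)\<^sup>2 / 6)
      \<le> (SUP I\<in>?C. \<integral>\<^sup>+\<omega>. ennreal ((est \<omega> - tau MA g (fst I) (snd I))\<^sup>2) \<partial>data_law MX MA pol (fst I) (snd I) n)"
  proof (rule two_point_risk_bound[OF prob_space_data_law[OF Gams_kernel order.refl] _ data_law_Gam_alt_dominates[OF sq_meas]])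
    show "est \<in> borel_measurable (law Gams n)"
      using est by (simp add: measurable_cong_sets[OF sets_data_law[OF Gams_kernel order.refl] refl])
    show "(\<integral>\<^sup>+\<omega>. ennreal ((est \<omega> - ?t0)\<^sup>2) \<partial>law Gams n)
        \<le> (SUP I\<in>?C. \<integral>\<^sup>+\<omega>. ennreal ((est \<omega> - tau MA g (fst I) (snd I))\<^sup>2) \<partial>data_law MX MA pol (fst I) (snd I) n)"
      by (rule SUP_upper2[OF null_in_local_class]) simp
    show "(\<integral>\<^sup>+\<omega>. ennreal ((est \<omega> - (?t0 + tau_gap))\<^sup>2) \<partial>law Gam_alt n)
        \<le> (SUP I\<in>?C. \<integral>\<^sup>+\<omega>. ennreal ((est \<omega> - tau MA g (fst I) (snd I))\<^sup>2) \<partial>data_law MX MA pol (fst I) (snd I) n)"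
      by (rule SUP_upper2[OF alt_in_local_class]) (simp add: tau_Gam_alt(2))
  qed
  moreover have "ennreal (1 / (8 * K ^ 4) * (enn2real (sigma_norm_sq MX MA pol g n Xis Gams) / real n))
      \<le> ennreal (((?t0 + tau_gap) - ?t0)\<^sup>2 / 6)"
    using risk_bound_le_gap unfolding sigma_sq_def by (simp add: ennreal_leI)
  ultimately show "ennreal (1 / (8 * K ^ 4) * (enn2real (sigma_norm_sq MX MA pol g n Xis Gams) / real n))
      \<le> (SUP I\<in>?C. \<integral>\<^sup>+\<omega>. ennreal ((est \<omega> - tau MA g (fst I) (snd I))\<^sup>2) \<partial>data_law MX MA pol (fst I) (snd I) n)"
    by (rule order.trans[rotated])
qed

end

theorem lemma4:
  fixes MX :: "'x measure" and MA :: "'a measure"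
    and pol :: "nat \<Rightarrow> 'x \<Rightarrow> (nat \<Rightarrow> 'x \<times> 'a \<times> real) \<Rightarrow> 'a \<Rightarrow> real"
    and pbar :: "nat \<Rightarrow> 'x \<Rightarrow> 'a \<Rightarrow> real"
    and g \<delta> :: "'x \<Rightarrow> 'a \<Rightarrow> real"
    and Xis :: "'x measure" and Gams :: "'x \<Rightarrow> 'a \<Rightarrow> real measure"
    and n :: nat and K :: real
  assumes sfX: "sigma_finite_measure MX"
    and sfA: "sigma_finite_measure MA"
    and pol_meas: "\<And>i. i < n \<Longrightarrow>
        (\<lambda>(x, h, a). pol i x h a) \<in> borel_measurable (MX \<Otimes>\<^sub>M (hist_space MX MA i \<Otimes>\<^sub>M MA))"
    and pol_nonneg: "\<And>i x h a. i < n \<Longrightarrow> x \<in> space MX \<Longrightarrow> h \<in> space (hist_space MX MA i) \<Longrightarrow>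
        a \<in> space MA \<Longrightarrow> 0 \<le> pol i x h a"
    and pol_dens: "\<And>i x h. i < n \<Longrightarrow> x \<in> space MX \<Longrightarrow> h \<in> space (hist_space MX MA i) \<Longrightarrow>
        (\<integral>\<^sup>+ a. ennreal (pol i x h a) \<partial>MA) = 1"
    and g_meas: "(\<lambda>(x, a). g x a) \<in> borel_measurable (MX \<Otimes>\<^sub>M MA)"
    and delta_nonneg: "\<And>x a. x \<in> space MX \<Longrightarrow> a \<in> space MA \<Longrightarrow> 0 \<le> \<delta> x a"
    and inst: "is_instance MX MA Xis Gams"
    and tau_def: "tau_defined MA g Xis Gams"
    and var_fin: "\<And>x a. x \<in> space MX \<Longrightarrow> a \<in> space MA \<Longrightarrow>
        integrable (Gams x a) (\<lambda>y. (y - cond_mean Gams x a)\<^sup>2)"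
    and K_ge: "1 \<le> K"
    and pbar_meas: "\<And>i. i < n \<Longrightarrow> (\<lambda>(x, a). pbar i x a) \<in> borel_measurable (MX \<Otimes>\<^sub>M MA)"
    and pbar_nonneg: "\<And>i x a. i < n \<Longrightarrow> x \<in> space MX \<Longrightarrow> a \<in> space MA \<Longrightarrow> 0 \<le> pbar i x a"
    and pbar_dens: "\<And>i x. i < n \<Longrightarrow> x \<in> space MX \<Longrightarrow> (\<integral>\<^sup>+ a. ennreal (pbar i x a) \<partial>MA) = 1"
    and ratio: "\<And>i x h a. i < n \<Longrightarrow> x \<in> space MX \<Longrightarrow> h \<in> space (hist_space MX MA i) \<Longrightarrow>
        a \<in> space MA \<Longrightarrow> 1 / K \<le> pbar i x a / pol i x h a \<and> pbar i x a / pol i x h a \<le> K"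
    and LN_pos: "0 < sigma_norm_sq MX MA pol g n Xis Gams"
    and LN_fin: "sigma_norm_sq MX MA pol g n Xis Gams < \<infinity>"
    and LN: "\<And>i x a. i < n \<Longrightarrow> x \<in> space MX \<Longrightarrow> a \<in> space MA \<Longrightarrow>
        sqrt (real n) * \<delta> x a \<ge>
          \<bar>g x a\<bar> * noise_var Gams x a /
            (pbar i x a * sqrt (enn2real (sigma_norm_sq MX MA pol g n Xis Gams)))"
  shows "ennreal (1 / (8 * K ^ 4) * (enn2real (sigma_norm_sq MX MA pol g n Xis Gams) / real n))
           \<le> local_minimax MX MA pol g n (local_class MX MA g n \<delta> Xis Gams)"
proof -
  have Xis: "prob_space Xis" "sets Xis = sets MX"
    using inst by (simp_all add: is_instance_def)
  interpret local_minimax_setting MX MA pol Xis n pbar g \<delta> Gams K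
    by (rule local_minimax_setting.intro[OF adaptive_design.intro[OF sfA pol_meas pol_dens Xis]
          local_minimax_setting_axioms.intro[OF pol_nonneg g_meas delta_nonneg inst tau_def K_ge
            pbar_meas pbar_nonneg ratio LN_pos LN_fin LN]])
  show ?thesis
    by (rule local_minimax_lower_bound)
qed

end
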